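(* For any partitions $\mu,\nu$, $$\lim_{\alpha\to\pm\infty}\frac{\hat L^{(\alpha)}_{\mu,\nu}(\alpha x)}{\alpha^{|\mu|+|\nu|}}=(x-1)^{|\mu|}(x+1)^{|\nu|},\qquad \lim_{\alpha\to\pm\infty}\frac{\hat\Omega^{(\alpha)}_{\mu,\nu}(\alpha x)}{\alpha^{|\mu|+|\nu|}}=(x-1)^{|\mu|}(x+1)^{|\nu|}.$$
   Context: For a partition $\lambda=(\lambda_1\ge\dots\ge\lambda_{\ell(\lambda)}>0)$ the degree vector has entries $n_i=\lambda_i+\ell(\lambda)-i$; $\Delta$ of a list $(y_1,\dots,y_r)$ is $\prod_{i<j}(y_j-y_i)$. Let $\hat L_n^{(\alpha)}=(-1)^nn!\,L_n^{(\alpha)}$ with $L_n^{(\alpha)}$ the classical Laguerre polynomial (so $\hat L_n^{(\alpha)}$ is monic of degree $n$). Let $n_\mu=(n_1,\dots,n_{\ell(\mu)})$ and $m_\nu=(m_1,\dots,m_{\ell(\nu)})$ be the degree vectors of $\mu$ and $\nu$. For real $\alpha$ such that $n_1,\dots,n_{\ell(\mu)},m_1-\alpha,\dots,m_{\ell(\nu)}-\alpha$ are pairwise distinct, $$\hat L^{(\alpha)}_{\mu,\nu}(x)=\frac{x^{(\ell(\mu)+\alpha)\ell(\nu)}}{\Delta(n_\mu,m_\nu-\alpha)}\mathrm{Wr}\big[\hat L^{(\alpha)}_{n_1},\dots,\hat L^{(\alpha)}_{n_{\ell(\mu)}},x^{-\alpha}\hat L^{(-\alpha)}_{m_1},\dots,x^{-\alpha}\hat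 L^{(-\alpha)}_{m_{\ell(\nu)}}\big],$$ a monic polynomial in $x$ of degree $|\mu|+|\nu|$ (extended to other $\alpha$ by continuity). For every $\alpha$, $$\hat\Omega^{(\alpha)}_{\mu,\nu}(x)=\frac{(-1)^{\sum_jm_j}}{\Delta(n_\mu)\Delta(m_\nu)}e^{-\ell(\nu)x}\,\mathrm{Wr}\big[\hat L^{(\alpha)}_{n_1}(x),\dots,\hat L^{(\alpha)}_{n_{\ell(\mu)}}(x),e^x\hat L^{(\alpha)}_{m_1}(-x),\dots,e^x\hat L^{(\alpha)}_{m_{\ell(\nu)}}(-x)\big],$$ a monic polynomial of degree $|\mu|+|\nu|$. The limits are taken for fixed $x$ as $\alpha$ tends to $+\infty$ or $-\infty$ through real values. *)

theory Defs
  imports "HOL-Analysis.Analysis" "HOL-Computational_Algebra.Polynomial"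
begin

definition is_partition :: "nat list \<Rightarrow> bool" where
  "is_partition lam \<longleftrightarrow> sorted_wrt (\<ge>) lam \<and> (\<forall>k\<in>set lam. 0 < k)"

definition psize :: "nat list \<Rightarrow> nat" where
  "psize lam = sum_list lam"

text \<open>Degree vector n_i = lam_i + l(lam) - i (1-indexed; here 0-indexed i).\<close>
definition degvec :: "nat list \<Rightarrow> nat list" where
  "degvec lam = map (\<lambda>i. lam ! i + length lam - 1 - i) [0..<length lam]"

definition vdm :: "real list \<Rightarrow> real" where
  "vdm ys = (\<Prod>j<length ys. \<Prod>i<j. (ys ! j - ys ! i))"

text \<open>Monic Laguerre polynomial (-1)^n n! L_n^(a)(x).\<close>
definition lag_hat :: "real \<Rightarrow> nat \<Rightarrow> real \<Rightarrow> real" where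
  "lag_hat a n x = (\<Sum>k\<le>n. (-1) ^ (n - k) * (fact n / fact k)
                       * ((real n + a) gchoose (n - k)) * x ^ k)"

definition wronskian :: "(real \<Rightarrow> real) list \<Rightarrow> real \<Rightarrow> real" where
  "wronskian fs x = (\<Sum>p | p permutes {..<length fs}.
      of_int (sign p) * (\<Prod>i<length fs. (deriv ^^ i) (fs ! (p i)) x))"

definition lag_generic :: "real \<Rightarrow> nat list \<Rightarrow> nat list \<Rightarrow> bool" where
  "lag_generic a mu nu \<longleftrightarrow>
     distinct (map real (degvec mu) @ map (\<lambda>m. real m - a) (degvec nu))"

definition lag_mn_generic :: "real \<Rightarrow> nat list \<Rightarrow> nat list \<Rightarrow> real poly" where
  "lag_mn_generic a mu nu = (THE p. \<forall>x>0. poly p x =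
      x powr ((real (length mu) + a) * real (length nu))
        / vdm (map real (degvec mu) @ map (\<lambda>m. real m - a) (degvec nu))
        * wronskian (map (\<lambda>n. lag_hat a n) (degvec mu)
                     @ map (\<lambda>m. \<lambda>y. y powr (- a) * lag_hat (- a) m y) (degvec nu)) x)"

definition lag_mn :: "real \<Rightarrow> nat list \<Rightarrow> nat list \<Rightarrow> real poly" where
  "lag_mn a mu nu = (if lag_generic a mu nu then lag_mn_generic a mu nu
     else Poly (map (\<lambda>i. Lim (at a) (\<lambda>b. coeff (lag_mn_generic b mu nu) i))
                   [0..<psize mu + psize nu + 1]))"

definition omega_mn :: "real \<Rightarrow> nat list \<Rightarrow> nat list \<Rightarrow> real \<Rightarrow> real" where
  "omega_mn a mu nu x =
     (-1) ^ sum_list (degvec nu) / (vdm (map real (degvec mu)) * vdm (map real (degvec nu)))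
     * exp (- real (length nu) * x)
     * wronskian (map (\<lambda>n. lag_hat a n) (degvec mu)
                  @ map (\<lambda>m. \<lambda>y. exp y * lag_hat a m (- y)) (degvec nu)) x"

end

theory Submission
  imports Defs "Jordan_Normal_Form.Determinant"
begin

(* Both Wronskians are expanded multilinearly in their columns.  For L, on x > 0 every column is a
   finite sum of power functions x^e; the Wronskian of powers is a Vandermonde product, so L becomes
   a sum over index maps g of coefficient products times Vandermonde products.  For Omega, the
   Leibniz rule writes the columns e^x p(-x) through the derivatives of p with binomial weights, so
   Omega becomes a sum over index maps g of products of derivatives times determinants of unit and
   binomial columns.  Substituting x := a x and dividing by a^(|mu| + |nu|), each coefficient
   converges, because the monic Laguerre polynomial of degree n with parameter s a, evaluated at
   a x and divided by a^n, tends to (x - s)^n.  For Omega the terms whose index map is not minimal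
   carry a negative power of a and disappear.  In both cases the limit terms reassemble by
   multilinearity into a block diagonal determinant whose blocks are the Wronskians of the powers
   (x - 1)^n_i and (x + 1)^m_j, i.e. Vandermonde products times (x - 1)^|mu| and (x + 1)^|nu|, and
   the Vandermonde products cancel against the normalisations. *)

section \<open>Falling factorials and higher derivatives\<close>

definition ffact :: "real \<Rightarrow> nat \<Rightarrow> real" where
  "ffact e i = (\<Prod>q<i. e - real q)"

lemma ffact_0 [simp]: "ffact e 0 = 1"
  by (simp add: ffact_def)

lemma ffact_Suc: "ffact e (Suc i) = ffact e i * (e - real i)"
  by (simp add: ffact_def)

lemma ffact_of_nat_eq_0: "n < i \<Longrightarrow> ffact (real n) i = 0"
  unfolding ffact_def by (rule prod_zero) (auto intro!: bexI[of _ n])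

lemma ffact_Suc_of_nat: "ffact (real n) i * real (n - i) = ffact (real n) (Suc i)"
  by (cases "i \<le> n") (simp_all add: ffact_Suc of_nat_diff ffact_of_nat_eq_0)

lemma higher_deriv_eqI:
  fixes f :: "real \<Rightarrow> real" and H :: "nat \<Rightarrow> real \<Rightarrow> real"
  assumes S: "open S" "y \<in> S"
    and f: "\<And>z. z \<in> S \<Longrightarrow> f z = H 0 z"
    and H: "\<And>u z. z \<in> S \<Longrightarrow> (H u has_real_derivative H (Suc u) z) (at z)"
  shows "(deriv ^^ i) f y = H i y"
  using S(2)
proof (induction i arbitrary: y)
  case 0
  then show ?case by (simp add: f)
next
  case (Suc i)
  have "eventually (\<lambda>z. (deriv ^^ i) f z = H i z) (nhds y)"
    using eventually_nhds_in_open[OF S(1) Suc.prems] by (rule eventually_mono) (rule Suc.IH)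
  then have "deriv ((deriv ^^ i) f) y = deriv (H i) y"
    by (rule deriv_cong_ev) simp
  also have "\<dots> = H (Suc i) y"
    by (rule DERIV_imp_deriv) (rule H[OF Suc.prems])
  finally show ?case by simp
qed

lemma has_real_derivative_ffact_power_sum:
  fixes c :: "nat \<Rightarrow> real"
  shows "((\<lambda>y. \<Sum>t\<in>T. c t * ffact (real t) u * y ^ (t - u)) has_real_derivative
          (\<Sum>t\<in>T. c t * ffact (real t) (Suc u) * y ^ (t - Suc u))) (at y)"
  by (rule derivative_eq_intros refl)+
     (simp add: ffact_Suc_of_nat[symmetric] mult_ac)

lemma higher_deriv_power_sum:
  fixes c :: "nat \<Rightarrow> real"
  shows "(deriv ^^ i) (\<lambda>y. \<Sum>t\<in>T. c t * y ^ t) y = (\<Sum>t\<in>T. c t * ffact (real t) i * y ^ (t - i))"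
  by (rule higher_deriv_eqI[where S = UNIV and H = "\<lambda>u y. \<Sum>t\<in>T. c t * ffact (real t) u * y ^ (t - u)"])
     (simp_all add: has_real_derivative_ffact_power_sum)

lemma higher_deriv_powr_sum:
  fixes c e :: "nat \<Rightarrow> real"
  assumes y: "y > 0" and f: "\<And>z. z > 0 \<Longrightarrow> f z = (\<Sum>t\<in>T. c t * z powr e t)"
  shows "(deriv ^^ i) f y = (\<Sum>t\<in>T. c t * ffact (e t) i * y powr (e t - real i))"
proof (rule higher_deriv_eqI[where S = "{0<..}"])
  fix u and z :: real
  assume "z \<in> {0<..}"
  then have "((\<lambda>z. \<Sum>t\<in>T. c t * ffact (e t) u * z powr (e t - real u)) has_real_derivative
      (\<Sum>t\<in>T. c t * ffact (e t) u * ((e t - real u) * z powr (e t - real u - 1)))) (at z)"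
    by (intro DERIV_sum DERIV_cmult has_real_derivative_powr) simp
  moreover have "(\<Sum>t\<in>T. c t * ffact (e t) u * ((e t - real u) * z powr (e t - real u - 1))) =
      (\<Sum>t\<in>T. c t * ffact (e t) (Suc u) * z powr (e t - real (Suc u)))"
    by (intro sum.cong refl) (simp add: ffact_Suc algebra_simps diff_diff_add)
  ultimately show "((\<lambda>z. \<Sum>t\<in>T. c t * ffact (e t) u * z powr (e t - real u)) has_real_derivative
      (\<Sum>t\<in>T. c t * ffact (e t) (Suc u) * z powr (e t - real (Suc u)))) (at z)"
    by simp
qed (use y f in simp_all)

lemma sum_atMost_Suc_choose:
  fixes h :: "nat \<Rightarrow> real"
  shows "(\<Sum>u\<le>Suc i. real (Suc i choose u) * h u) =
     (\<Sum>u\<le>i. real (i choose u) * h u) + (\<Sum>u\<le>i. real (i choose u) * h (Suc u))"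
proof -
  have "(\<Sum>u\<le>Suc i. real (Suc i choose u) * h u) =
      h 0 + (\<Sum>u\<le>i. real (i choose Suc u) * h (Suc u)) + (\<Sum>u\<le>i. real (i choose u) * h (Suc u))"
    by (subst sum.atMost_Suc_shift) (simp add: sum.distrib algebra_simps)
  also have "h 0 + (\<Sum>u\<le>i. real (i choose Suc u) * h (Suc u)) = (\<Sum>u\<le>Suc i. real (i choose u) * h u)"
    by (subst sum.atMost_Suc_shift) simp
  finally show ?thesis by simp
qed

lemma higher_deriv_exp_mult:
  fixes H :: "nat \<Rightarrow> real \<Rightarrow> real"
  assumes H: "\<And>u z. (H u has_real_derivative H (Suc u) z) (at z)"
  shows "(deriv ^^ i) (\<lambda>z. exp z * H 0 z) y = exp y * (\<Sum>u\<le>i. real (i choose u) * H u y)"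
proof (rule higher_deriv_eqI[where S = UNIV and H = "\<lambda>i z. exp z * (\<Sum>u\<le>i. real (i choose u) * H u z)"])
  fix i and z :: real
  show "((\<lambda>z. exp z * (\<Sum>u\<le>i. real (i choose u) * H u z)) has_real_derivative
      exp z * (\<Sum>u\<le>Suc i. real (Suc i choose u) * H u z)) (at z)"
    unfolding sum_atMost_Suc_choose[of i "\<lambda>u. H u z"]
    by (rule derivative_eq_intros H refl)+ (simp add: algebra_simps sum.distrib sum_distrib_left)
qed simp_all

lemma higher_deriv_exp_mult_power_sum:
  fixes c :: "nat \<Rightarrow> real"
  shows "(deriv ^^ i) (\<lambda>z. exp z * (\<Sum>t\<in>T. c t * z ^ t)) y =
    exp y * (\<Sum>u\<le>i. real (i choose u) * (deriv ^^ u) (\<lambda>z. \<Sum>t\<in>T. c t * z ^ t) y)"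
  using higher_deriv_exp_mult[of "\<lambda>u z. \<Sum>t\<in>T. c t * ffact (real t) u * z ^ (t - u)" i y]
  by (simp add: has_real_derivative_ffact_power_sum higher_deriv_power_sum)

lemma higher_deriv_shifted_power:
  "(deriv ^^ i) (\<lambda>y. (y - c) ^ n) x = ffact (real n) i * (x - c) ^ (n - i)"
  by (rule higher_deriv_eqI[where S = UNIV and H = "\<lambda>i y. ffact (real n) i * (y - c) ^ (n - i)"])
     (auto intro!: derivative_eq_intros simp: ffact_Suc_of_nat[symmetric])

lemma sum_binomial_ffact_power:
  "(\<Sum>t\<le>n. real (n choose t) * (- c) ^ (n - t) * ffact (real t) u * x ^ (t - u)) =
    ffact (real n) u * (x - c) ^ (n - u)"
proof -
  have "(\<lambda>y. (y - c) ^ n) = (\<lambda>y. \<Sum>t\<le>n. (real (n choose t) * (- c) ^ (n - t)) * y ^ t)"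
    using binomial_ring[of _ "- c" n] by (simp add: mult_ac)
  then show ?thesis
    using higher_deriv_shifted_power[of u c n x] higher_deriv_power_sum[of u _ "{..n}" x] by simp
qed

section \<open>Determinants and Vandermonde products\<close>

lemma det_mat_eq_sum_permutes_cols:
  "Determinant.det (mat r r f) = (\<Sum>p | p permutes {0..<r}. signof p * (\<Prod>j = 0..<r. f (p j, j)))"
proof -
  have "Determinant.det (mat r r f) = Determinant.det (transpose_mat (mat r r f))"
    by (rule det_transpose[symmetric]) auto
  then show ?thesis
    unfolding det_def by (auto intro!: sum.cong prod.cong simp: permutes_in_image)
qed

lemma det_mat_eq_sum_permutes_rows:
  "Determinant.det (mat r r f) = (\<Sum>p | p permutes {0..<r}. signof p * (\<Prod>i = 0..<r. f (i, p i)))"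
  unfolding det_def by (auto intro!: sum.cong prod.cong simp: permutes_in_image)

lemma wronskian_eq_det:
  "wronskian fs y = Determinant.det (mat (length fs) (length fs) (\<lambda>(i,j). (deriv ^^ i) (fs ! j) y))"
  unfolding wronskian_def det_mat_eq_sum_permutes_rows by (simp add: atLeast0LessThan)

lemma det_mat_multilinear_cols:
  fixes C :: "nat \<Rightarrow> nat \<Rightarrow> 'a::comm_ring_1" and V :: "nat \<Rightarrow> nat \<Rightarrow> nat \<Rightarrow> 'a"
  assumes "\<And>j. finite (U j)"
  shows "Determinant.det (mat r r (\<lambda>(i,j). \<Sum>u\<in>U j. C j u * V j u i)) =
    (\<Sum>g\<in>PiE {0..<r} U. (\<Prod>j = 0..<r. C j (g j)) * Determinant.det (mat r r (\<lambda>(i,j). V j (g j) i)))"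
proof -
  have "Determinant.det (mat r r (\<lambda>(i,j). \<Sum>u\<in>U j. C j u * V j u i)) =
     (\<Sum>p | p permutes {0..<r}. signof p * (\<Sum>g\<in>PiE {0..<r} U. \<Prod>j = 0..<r. C j (g j) * V j (g j) (p j)))"
    by (simp add: det_mat_eq_sum_permutes_cols prod_sum_PiE assms)
  also have "\<dots> = (\<Sum>g\<in>PiE {0..<r} U. \<Sum>p | p permutes {0..<r}.
      (\<Prod>j = 0..<r. C j (g j)) * (signof p * (\<Prod>j = 0..<r. V j (g j) (p j))))"
    by (subst sum.swap) (simp add: sum_distrib_left prod.distrib algebra_simps)
  finally show ?thesis
    by (simp add: det_mat_eq_sum_permutes_cols sum_distrib_left)
qed

lemma det_mat_scale_cols:
  "Determinant.det (mat r r (\<lambda>(i,j). f i j * s j)) = (\<Prod>j = 0..<r. s j) * Determinant.det (mat r r (\<lambda>(i,j). f i j))"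
  by (simp add: det_mat_eq_sum_permutes_cols sum_distrib_left prod.distrib algebra_simps)

lemma det_mat_scale_rows:
  "Determinant.det (mat r r (\<lambda>(i,j). f i j * s i)) = (\<Prod>i = 0..<r. s i) * Determinant.det (mat r r (\<lambda>(i,j). f i j))"
  by (simp add: det_mat_eq_sum_permutes_rows sum_distrib_left prod.distrib algebra_simps)

lemma det_mat_block_diag:
  fixes A B :: "nat \<Rightarrow> nat \<Rightarrow> 'a::idom"
  shows "Determinant.det (mat (k + l) (k + l) (\<lambda>(i,j). if j < k then (if i < k then A i j else 0)
      else (if k \<le> i then B (i - k) (j - k) else 0))) =
    Determinant.det (mat k k (\<lambda>(i,j). A i j)) * Determinant.det (mat l l (\<lambda>(i,j). B i j))"
    (is "Determinant.det ?M = _")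
proof -
  let ?B = "four_block_mat (mat k k (\<lambda>(i,j). A i j)) (0\<^sub>m k l) (0\<^sub>m l k) (mat l l (\<lambda>(i,j). B i j))"
  have "?M = ?B"
  proof (rule eq_matI)
    fix i j
    assume "i < dim_row ?B" "j < dim_col ?B"
    then show "?M $$ (i, j) = ?B $$ (i, j)"
      by simp
  qed simp_all
  also have "Determinant.det ?B = Determinant.det (mat k k (\<lambda>(i,j). A i j)) * Determinant.det (mat l l (\<lambda>(i,j). B i j))"
    by (rule det_four_block_mat_lower_left_zero) auto
  finally show ?thesis .
qed

lemma vdm_Nil [simp]: "vdm [] = 1"
  by (simp add: vdm_def)

lemma vdm_Cons: "vdm (x # xs) = (\<Prod>j<length xs. xs ! j - x) * vdm xs"
proof -
  have "vdm (x # xs) = (\<Prod>j<Suc (length xs). \<Prod>i<j. (x # xs) ! j - (x # xs) ! i)"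
    by (simp add: vdm_def)
  also have "\<dots> = (\<Prod>j<length xs. \<Prod>i<Suc j. (x # xs) ! Suc j - (x # xs) ! i)"
    by (subst prod.lessThan_Suc_shift) simp
  also have "\<dots> = (\<Prod>j<length xs. (xs ! j - x) * (\<Prod>i<j. xs ! j - xs ! i))"
    by (intro prod.cong refl, subst prod.lessThan_Suc_shift) simp
  finally show ?thesis
    by (simp add: prod.distrib vdm_def)
qed

lemma vdm_snoc: "vdm (xs @ [y]) = vdm xs * (\<Prod>i<length xs. y - xs ! i)"
  unfolding vdm_def by (simp add: nth_append)

definition cross :: "real list \<Rightarrow> real list \<Rightarrow> real" where
  "cross xs ys = (\<Prod>j<length ys. \<Prod>i<length xs. ys ! j - xs ! i)"

lemma prod_lessThan_add:
  "(\<Prod>i<a + (b::nat). f i) = (\<Prod>i<a. f i) * (\<Prod>i<b. f (a + i)::'a::comm_monoid_mult)"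
  by (induction b) (simp_all add: mult.assoc)

lemma vdm_append: "vdm (xs @ ys) = vdm xs * vdm ys * cross xs ys"
proof (induction ys rule: rev_induct)
  case Nil
  then show ?case by (simp add: cross_def)
next
  case (snoc y ys)
  have "(\<Prod>i<length xs + length ys. y - (xs @ ys) ! i) = (\<Prod>i<length xs. y - xs ! i) * (\<Prod>i<length ys. y - ys ! i)"
    by (simp add: prod_lessThan_add nth_append)
  then show ?case
    using vdm_snoc[of "xs @ ys" y] snoc by (simp add: vdm_snoc cross_def nth_append mult_ac)
qed

lemma vdm_eq_0_iff: "vdm xs = 0 \<longleftrightarrow> \<not> distinct xs"
proof
  assume "vdm xs = 0"
  then obtain i j where "j < length xs" "i < j" "xs ! j = xs ! i"
    by (auto simp: vdm_def prod_zero_iff)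
  then show "\<not> distinct xs"
    by (metis distinct_conv_nth less_trans nat_neq_iff)
next
  assume "\<not> distinct xs"
  then obtain i j where ij: "i < j" "j < length xs" "xs ! i = xs ! j"
    by (metis distinct_conv_nth linorder_neqE_nat)
  then have "(\<Prod>i'<j. xs ! j - xs ! i') = 0"
    by (intro prod_zero) (auto intro!: bexI[of _ i])
  then show "vdm xs = 0"
    unfolding vdm_def using ij by (intro prod_zero) auto
qed

lemma vdm_map_diff: "vdm (map (\<lambda>z. z - a) xs) = vdm xs"
  unfolding vdm_def by simp

lemma det_mat_ffact: "Determinant.det (mat r r (\<lambda>(i,j). ffact (e j) i)) = vdm (map e [0..<r])"
proof (induction r arbitrary: e)
  case 0
  then show ?case by (simp add: det_def)
next
  case (Suc r)
  define n where "n = Suc r"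
  define A where "A = mat n n (\<lambda>(i,j). ffact (e j) i)"
  \<comment> \<open>Subtracting (e 0 - (i - 1)) times row i - 1 from row i turns column j into
      (1, (e j - e 0) ffact (e j) (i - 1))_i, since ffact e i = ffact e (i - 1) * (e - (i - 1)).\<close>
  define L where "L = mat n n (\<lambda>(i,j). if i = j then 1 else if i = Suc j then -(e 0 - real j) else (0::real))"
  define M where "M = mat r r (\<lambda>(i,j). ffact (e (Suc j)) i * (e (Suc j) - e 0))"
  have LA: "L * A = four_block_mat (mat 1 1 (\<lambda>_. 1)) (mat 1 r (\<lambda>_. 1)) (0\<^sub>m r 1) M"
  proof (rule eq_matI)
    fix i j
    assume "i < dim_row (four_block_mat (mat 1 1 (\<lambda>_. 1)) (mat 1 r (\<lambda>_. 1)) (0\<^sub>m r 1) M)"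
      and "j < dim_col (four_block_mat (mat 1 1 (\<lambda>_. 1)) (mat 1 r (\<lambda>_. 1)) (0\<^sub>m r 1) M)"
    then have i: "i < n" and j: "j < n" by (auto simp: M_def n_def)
    have "(L * A) $$ (i, j) = (\<Sum>t = 0..<n. (if t = i then ffact (e j) i else 0) +
        (if 0 < i \<and> t = i - 1 then -(e 0 - real (i - 1)) * ffact (e j) (i - 1) else 0))"
      using i j by (simp add: L_def A_def scalar_prod_def)
        (intro sum.cong refl, auto simp: L_def A_def)
    also have "\<dots> = ffact (e j) i + (if 0 < i then -(e 0 - real (i - 1)) * ffact (e j) (i - 1) else 0)"
      using i by (simp add: sum.distrib, linarith)
    also have "\<dots> = (if i = 0 then 1 else ffact (e j) (i - 1) * (e j - e 0))"
      by (cases i) (simp_all add: ffact_Suc algebra_simps)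
    finally show "(L * A) $$ (i, j) = four_block_mat (mat 1 1 (\<lambda>_. 1)) (mat 1 r (\<lambda>_. 1)) (0\<^sub>m r 1) M $$ (i, j)"
      using i j by (cases j) (auto simp: M_def n_def)
  qed (auto simp: L_def A_def M_def n_def)
  have "Determinant.det L = 1"
    by (subst det_lower_triangular[of n]) (auto simp: L_def prod_list_diag_prod)
  moreover have "L \<in> carrier_mat n n" "A \<in> carrier_mat n n"
    by (simp_all add: L_def A_def)
  ultimately have "Determinant.det A = Determinant.det (L * A)"
    by (simp add: det_mult)
  also have "\<dots> = Determinant.det M"
    unfolding LA by (subst det_four_block_mat_lower_left_zero[of _ 1 _ r]) (auto simp: M_def det_def)
  also have "\<dots> = (\<Prod>j = 0..<r. e (Suc j) - e 0) * vdm (map (e \<circ> Suc) [0..<r])"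
    unfolding M_def det_mat_scale_cols[of r "\<lambda>i j. ffact (e (Suc j)) i"] Suc.IH[of "e \<circ> Suc", symmetric]
    by (simp add: comp_def)
  also have "\<dots> = vdm (map e [0..<Suc r])"
    by (simp add: map_upt_Suc vdm_Cons atLeast0LessThan comp_def del: upt_Suc)
  finally show ?case by (simp add: A_def n_def)
qed

lemma det_mat_ffact_power:
  fixes g :: "nat \<Rightarrow> nat" and x :: real
  shows "Determinant.det (mat r r (\<lambda>(i,j). ffact (real (g j)) i * x ^ (g j - i))) =
    vdm (map (\<lambda>j. real (g j)) [0..<r]) * x ^ ((\<Sum>j = 0..<r. g j) - (\<Sum>i = 0..<r. i))"
proof -
  have product_eq: "(\<Prod>i = 0..<r. ffact (real (g (p i))) i * x ^ (g (p i) - i)) =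
      (\<Prod>i = 0..<r. ffact (real (g (p i))) i) * x ^ ((\<Sum>j = 0..<r. g j) - (\<Sum>i = 0..<r. i))"
    if p: "p permutes {0..<r}" for p
  proof (cases "\<exists>i<r. g (p i) < i")
    case True
    then obtain i where "i < r" "g (p i) < i" by blast
    then have "(\<Prod>i = 0..<r. ffact (real (g (p i))) i) = 0"
      "(\<Prod>i = 0..<r. ffact (real (g (p i))) i * x ^ (g (p i) - i)) = 0"
      by (auto intro!: prod_zero bexI[of _ i] simp: ffact_of_nat_eq_0)
    then show ?thesis by (simp only: mult_zero_left)
  next
    case False
    have "(\<Prod>i = 0..<r. x ^ (g (p i) - i)) = x ^ (\<Sum>i = 0..<r. g (p i) - i)"
      by (simp add: power_sum)
    also have "(\<Sum>i = 0..<r. g (p i) - i) = (\<Sum>i = 0..<r. g (p i)) - (\<Sum>i = 0..<r. i)"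
      by (rule sum_subtractf_nat) (use False in force)
    also have "(\<Sum>i = 0..<r. g (p i)) = (\<Sum>j = 0..<r. g j)"
      using sum.permute[OF p, of g] by (simp add: comp_def)
    finally show ?thesis
      by (simp add: prod.distrib)
  qed
  have "Determinant.det (mat r r (\<lambda>(i,j). ffact (real (g j)) i * x ^ (g j - i))) =
     (\<Sum>p | p permutes {0..<r}. signof p * ((\<Prod>i = 0..<r. ffact (real (g (p i))) i) *
        x ^ ((\<Sum>j = 0..<r. g j) - (\<Sum>i = 0..<r. i))))"
    unfolding det_mat_eq_sum_permutes_rows by (intro sum.cong refl) (simp add: product_eq)
  also have "\<dots> = Determinant.det (mat r r (\<lambda>(i,j). ffact (real (g j)) i)) *
      x ^ ((\<Sum>j = 0..<r. g j) - (\<Sum>i = 0..<r. i))"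
    unfolding det_mat_eq_sum_permutes_rows by (simp add: sum_distrib_right mult.assoc)
  finally show ?thesis
    by (simp add: det_mat_ffact)
qed

lemma det_mat_ffact_power_list:
  "Determinant.det (mat (length ns) (length ns) (\<lambda>(i,j). ffact (real (ns ! j)) i * z ^ (ns ! j - i))) =
    vdm (map real ns) * z ^ (sum_list ns - (\<Sum>i<length ns. i))"
proof -
  have "map (\<lambda>j. real (ns ! j)) [0..<length ns] = map real ns"
    by (rule nth_equalityI) auto
  then show ?thesis
    using det_mat_ffact_power[of "length ns" "\<lambda>j. ns ! j" z]
    by (simp add: sum_list_sum_nth atLeast0LessThan)
qed

lemma det_mat_ffact_power_upt:
  fixes g :: "nat \<Rightarrow> nat" and x :: real
  shows "Determinant.det (mat l l (\<lambda>(i,j). ffact (real (g (k + j))) i * x ^ (g (k + j) - i))) =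
    vdm (map (\<lambda>j. real (g j)) [k..<k + l]) * x ^ (sum g {k..<k + l} - (\<Sum>i<l. i))"
proof -
  have "map (\<lambda>j. real (g (k + j))) [0..<l] = map (\<lambda>j. real (g j)) [k..<k + l]"
    by (rule nth_equalityI) auto
  moreover have "(\<Sum>j = 0..<l. g (k + j)) = sum g {k..<k + l}"
    using sum.shift_bounds_nat_ivl[of g 0 k l] by (simp only: add.commute add_0)
  ultimately show ?thesis
    using det_mat_ffact_power[of l "\<lambda>j. g (k + j)" x] by (simp only: atLeast0LessThan[of l])
qed

lemma det_mat_ffact_powr:
  fixes e :: "nat \<Rightarrow> real" and y :: real
  assumes y: "y > 0"
  shows "Determinant.det (mat r r (\<lambda>(i,j). ffact (e j) i * y powr (e j - real i))) =
    y powr ((\<Sum>j = 0..<r. e j) - (\<Sum>i = 0..<r. real i)) * vdm (map e [0..<r])"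
proof -
  have "Determinant.det (mat r r (\<lambda>(i,j). ffact (e j) i * y powr (e j - real i))) =
      Determinant.det (mat r r (\<lambda>(i,j). (ffact (e j) i * y powr (e j)) * y powr (- real i)))"
    by (intro arg_cong[where f = Determinant.det] cong_mat refl) (auto simp: powr_add[symmetric])
  also have "\<dots> = (\<Prod>i = 0..<r. y powr (- real i)) * ((\<Prod>j = 0..<r. y powr (e j)) *
       Determinant.det (mat r r (\<lambda>(i,j). ffact (e j) i)))"
    by (simp only: det_mat_scale_rows det_mat_scale_cols)
  also have "(\<Prod>i = 0..<r. y powr (- real i)) = y powr (- (\<Sum>i = 0..<r. real i))"
    using y by (simp add: powr_sum sum_negf[symmetric])
  also have "(\<Prod>j = 0..<r. y powr (e j)) = y powr (\<Sum>j = 0..<r. e j)"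
    using y by (simp add: powr_sum)
  finally show ?thesis
    using y by (simp add: det_mat_ffact powr_add[symmetric] mult.assoc)
qed

lemma det_mat_binomial_shift: "Determinant.det (mat l l (\<lambda>(i,u). real ((k + i) choose u))) = 1"
proof -
  \<comment> \<open>Vandermonde's identity factors the shifted Pascal matrix into unitriangular factors.\<close>
  define P where "P = mat l l (\<lambda>(i,t). real (i choose t))"
  define U where "U = mat l l (\<lambda>(t,u). if t \<le> u then real (k choose (u - t)) else 0)"
  have "P * U = mat l l (\<lambda>(i,u). real ((k + i) choose u))"
  proof (rule eq_matI)
    fix i u
    assume "i < dim_row (mat l l (\<lambda>(i,u). real ((k + i) choose u)))"
      and "u < dim_col (mat l l (\<lambda>(i,u). real ((k + i) choose u)))"
    then have i: "i < l" and u: "u < l" by simp_all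
    have "(P * U) $$ (i,u) = (\<Sum>t = 0..<l. real (i choose t) * (if t \<le> u then real (k choose (u - t)) else 0))"
      using i u by (simp add: P_def U_def scalar_prod_def)
    also have "\<dots> = (\<Sum>t\<le>u. real (i choose t) * real (k choose (u - t)))"
      using u by (intro sum.mono_neutral_cong_right) auto
    also have "\<dots> = real ((i + k) choose u)"
      unfolding vandermonde[symmetric] by simp
    finally show "(P * U) $$ (i,u) = mat l l (\<lambda>(i,u). real ((k + i) choose u)) $$ (i,u)"
      using i u by (simp add: add.commute)
  qed (auto simp: P_def U_def)
  moreover have "Determinant.det P = 1"
    by (subst det_lower_triangular[of l]) (auto simp: P_def prod_list_diag_prod)
  moreover have "Determinant.det U = 1"
    by (subst det_upper_triangular[of _ l]) (auto simp: U_def prod_list_diag_prod upper_triangular_def)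
  moreover have "P \<in> carrier_mat l l" "U \<in> carrier_mat l l"
    by (simp_all add: P_def U_def)
  ultimately show ?thesis
    using det_mult[of P l U] by simp
qed

lemma det_mat_mult_binomial_shift:
  fixes L :: "nat \<Rightarrow> nat \<Rightarrow> real"
  shows "Determinant.det (mat l l (\<lambda>(i,j). \<Sum>u<l. L j u * real ((k + i) choose u))) =
    Determinant.det (mat l l (\<lambda>(i,j). L j i))"
proof -
  define P where "P = mat l l (\<lambda>(i,u). real ((k + i) choose u))"
  define E where "E = mat l l (\<lambda>(u,j). L j u)"
  have "mat l l (\<lambda>(i,j). \<Sum>u<l. L j u * real ((k + i) choose u)) = P * E"
  proof (rule eq_matI)
    fix i j
    assume "i < dim_row (P * E)" "j < dim_col (P * E)"
    then show "mat l l (\<lambda>(i,j). \<Sum>u<l. L j u * real ((k + i) choose u)) $$ (i, j) = (P * E) $$ (i, j)"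
      by (simp add: P_def E_def scalar_prod_def atLeast0LessThan mult_ac)
  qed (simp_all add: P_def E_def)
  then show ?thesis
    using det_mult[of P l E] det_mat_binomial_shift[of l k] by (simp add: P_def E_def)
qed

section \<open>Sums of injective index maps\<close>

lemma sum_lessThan_card_le_Sum: "finite (S::nat set) \<Longrightarrow> (\<Sum>i<card S. i) \<le> \<Sum>S"
proof (induction "card S" arbitrary: S)
  case 0
  then show ?case by simp
next
  case (Suc n)
  define m where "m = Max S"
  have "S \<noteq> {}"
    using Suc.hyps(2) by auto
  then have m: "m \<in> S" "\<And>s. s \<in> S \<Longrightarrow> s \<le> m"
    using Suc.prems by (auto simp: m_def)
  have "S \<subseteq> {..m}"
    using m by auto
  then have "n \<le> m"
    using card_mono[of "{..m}" S] Suc.hyps(2) by simp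
  have "(\<Sum>i<card S. i) = n + (\<Sum>i<n. i)"
    by (simp add: Suc.hyps(2)[symmetric])
  also have "\<dots> \<le> m + \<Sum>(S - {m})"
  proof -
    have "card (S - {m}) = n"
      using Suc.hyps(2) Suc.prems m(1) by simp
    then have "(\<Sum>i<n. i) \<le> \<Sum>(S - {m})"
      using Suc.hyps(1)[of "S - {m}"] Suc.prems by simp
    then show ?thesis
      using \<open>n \<le> m\<close> by linarith
  qed
  also have "\<dots> = \<Sum>S"
    using Suc.prems m by (simp add: sum.remove)
  finally show ?case .
qed

lemma Sum_eq_sum_lessThan_card_imp:
  assumes S: "finite (S::nat set)" and eq: "\<Sum>S = (\<Sum>i<card S. i)"
  shows "S = {..<card S}"
proof (rule ccontr)
  assume ne: "S \<noteq> {..<card S}"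
  have "\<not> S \<subseteq> {..<card S}"
    using ne card_subset_eq[of "{..<card S}" S] by auto
  then obtain s where s: "s \<in> S" "s \<ge> card S"
    by (meson lessThan_iff not_less subsetI)
  obtain t where t: "t < card S" "t \<notin> S"
    using ne card_subset_eq[OF S, of "{..<card S}"] by auto
  define S' where "S' = insert t (S - {s})"
  have "card S' = card S"
    using s t S by (simp add: S'_def card_insert_if)
  moreover have "\<Sum>S' + s = \<Sum>S + t"
    using s t S by (simp add: S'_def sum.remove)
  moreover have "(\<Sum>i<card S'. i) \<le> \<Sum>S'"
    using S by (intro sum_lessThan_card_le_Sum) (simp add: S'_def)
  ultimately show False
    using eq s t by simp
qed

lemma sum_lessThan_card_le_sum_inj_on:
  assumes "finite A" "inj_on (g::_\<Rightarrow>nat) A"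
  shows "(\<Sum>i<card A. i) \<le> sum g A"
  using sum_lessThan_card_le_Sum[of "g ` A"] assms by (simp add: card_image sum.reindex)

lemma sum_inj_on_eq_sum_lessThan_card_iff:
  assumes "finite A" "inj_on (g::_\<Rightarrow>nat) A"
  shows "sum g A = (\<Sum>i<card A. i) \<longleftrightarrow> (\<forall>j\<in>A. g j < card A)"
proof
  assume "sum g A = (\<Sum>i<card A. i)"
  then have "g ` A = {..<card (g ` A)}"
    using assms by (intro Sum_eq_sum_lessThan_card_imp) (simp_all add: sum.reindex card_image)
  then show "\<forall>j\<in>A. g j < card A"
    using assms by (auto simp: card_image)
next
  assume "\<forall>j\<in>A. g j < card A"
  then have "g ` A = {..<card A}"
    using assms by (intro card_subset_eq) (auto simp: card_image)
  then show "sum g A = (\<Sum>i<card A. i)"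
    using assms by (metis sum.reindex_cong)
qed

lemma sum_split_blocks: "sum g {0..<k + (l::nat)} = sum g {0..<k} + sum g {k..<k + l}"
  using sum.atLeastLessThan_concat[of 0 k "k + l" g] by simp

lemma sum_ge_if_inj_on_blocks:
  assumes "inj_on g {0..<k}" "inj_on (g::_\<Rightarrow>nat) {k..<k + l}"
  shows "(\<Sum>i<k. i) + (\<Sum>i<l. i) \<le> sum g {0..<k + l}"
  using sum_lessThan_card_le_sum_inj_on[of "{0..<k}" g] sum_lessThan_card_le_sum_inj_on[of "{k..<k + l}" g]
  by (simp add: assms sum_split_blocks)

lemma sum_eq_if_inj_on_blocks_iff:
  assumes "inj_on g {0..<k}" "inj_on (g::_\<Rightarrow>nat) {k..<k + l}"
  shows "sum g {0..<k + l} = (\<Sum>i<k. i) + (\<Sum>i<l. i) \<longleftrightarrow>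
    (\<forall>j\<in>{0..<k}. g j < k) \<and> (\<forall>j\<in>{k..<k + l}. g j < l)"
proof -
  have "(\<Sum>i<k. i) \<le> sum g {0..<k}" "(\<Sum>i<l. i) \<le> sum g {k..<k + l}"
    using sum_lessThan_card_le_sum_inj_on[of "{0..<k}" g] sum_lessThan_card_le_sum_inj_on[of "{k..<k + l}" g]
    by (simp_all add: assms)
  then have "sum g {0..<k + l} = (\<Sum>i<k. i) + (\<Sum>i<l. i) \<longleftrightarrow>
      sum g {0..<k} = (\<Sum>i<k. i) \<and> sum g {k..<k + l} = (\<Sum>i<l. i)"
    unfolding sum_split_blocks by linarith
  also have "\<dots> \<longleftrightarrow> (\<forall>j\<in>{0..<k}. g j < k) \<and> (\<forall>j\<in>{k..<k + l}. g j < l)"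
    using sum_inj_on_eq_sum_lessThan_card_iff[of "{0..<k}" g] sum_inj_on_eq_sum_lessThan_card_iff[of "{k..<k + l}" g]
    by (simp add: assms)
  finally show ?thesis .
qed

lemma sum_lessThan_add_nat: "(\<Sum>i<k + l. (i::nat)) = (\<Sum>i<k. i) + (\<Sum>i<l. i) + k * l"
  by (induction l) auto

lemma inj_on_if_distinct_map_of_nat: "distinct (map (\<lambda>j. real (g j)) xs) \<Longrightarrow> inj_on g (set xs)"
  by (simp add: distinct_map inj_on_def)

section \<open>Limits as the parameter tends to infinity\<close>

lemma eventually_nonzero_at_infinity: "eventually (\<lambda>a::real. a \<noteq> 0) at_infinity"
  unfolding eventually_at_infinity by (rule exI[of _ 1]) auto

lemma tendsto_const_divide_at_infinity: "((\<lambda>a::real. c / a) \<longlongrightarrow> 0) at_infinity"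
  using tendsto_mult[OF tendsto_const[of c] tendsto_inverse_0] by (simp add: divide_inverse)

lemma tendsto_gchoose_div_power:
  "((\<lambda>a::real. ((c + s * a) gchoose q) / a ^ q) \<longlongrightarrow> s ^ q / fact q) at_infinity"
proof -
  have "eventually (\<lambda>a. (\<Prod>i = 0..<q. (c - real i) / a + s) / fact q = ((c + s * a) gchoose q) / a ^ q) at_infinity"
    using eventually_nonzero_at_infinity
  proof (rule eventually_mono)
    fix a :: real
    assume a: "a \<noteq> 0"
    have "(\<Prod>i = 0..<q. (c - real i) / a + s) = (\<Prod>i = 0..<q. (c + s * a - real i) / a)"
      using a by (intro prod.cong refl) (simp add: field_simps)
    then show "(\<Prod>i = 0..<q. (c - real i) / a + s) / fact q = ((c + s * a) gchoose q) / a ^ q"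
      by (simp add: gbinomial_prod_rev prod_dividef)
  qed
  moreover have "((\<lambda>a. (\<Prod>i = 0..<q. (c - real i) / a + s) / fact q) \<longlongrightarrow> (\<Prod>i = 0..<q. 0 + s) / fact q) at_infinity"
    by (intro tendsto_intros tendsto_const_divide_at_infinity) simp
  ultimately show ?thesis
    by (simp add: tendsto_cong)
qed

lemma tendsto_diff_div_diff_at_infinity: "((\<lambda>a::real. (c1 - a) / (c2 - a)) \<longlongrightarrow> 1) at_infinity"
proof -
  have "eventually (\<lambda>a. (c1 / a - 1) / (c2 / a - 1) = (c1 - a) / (c2 - a)) at_infinity"
  proof (rule eventually_mono[OF eventually_nonzero_at_infinity])
    fix a :: real
    assume "a \<noteq> 0"
    then have "c1 / a - 1 = (c1 - a) / a" "c2 / a - 1 = (c2 - a) / a"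
      by (simp_all add: field_simps)
    then show "(c1 / a - 1) / (c2 / a - 1) = (c1 - a) / (c2 - a)"
      using \<open>a \<noteq> 0\<close> by simp
  qed
  moreover have "((\<lambda>a. (c1 / a - 1) / (c2 / a - 1)) \<longlongrightarrow> (0 - 1) / (0 - 1)) at_infinity"
    by (intro tendsto_intros tendsto_const_divide_at_infinity) simp
  ultimately show ?thesis
    by (simp add: tendsto_cong)
qed

lemma tendsto_power_div_power_at_infinity:
  assumes "p \<le> q"
  shows "((\<lambda>a::real. a ^ p / a ^ q) \<longlongrightarrow> (if q = p then 1 else 0)) at_infinity"
proof -
  have ev: "eventually (\<lambda>a::real. inverse a ^ (q - p) = a ^ p / a ^ q) at_infinity"
    by (rule eventually_mono[OF eventually_nonzero_at_infinity])
       (simp add: assms power_diff power_inverse divide_inverse)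
  have "((\<lambda>a::real. inverse a ^ (q - p)) \<longlongrightarrow> 0 ^ (q - p)) at_infinity"
    by (intro tendsto_power tendsto_inverse_0)
  moreover have "(0::real) ^ (q - p) = (if q = p then 1 else 0)"
    using assms by simp
  ultimately show ?thesis
    using tendsto_cong[OF ev] by simp
qed

lemma prod_mult_power_div_power:
  fixes c :: "nat \<Rightarrow> real" and a :: real
  assumes "a \<noteq> 0" and "N + KL = (\<Sum>j = 0..<r. d j)" and "KL \<le> sum g {0..<r}"
  shows "(\<Prod>j = 0..<r. c j * a ^ g j / a ^ d j) = (\<Prod>j = 0..<r. c j) * a ^ (sum g {0..<r} - KL) / a ^ N"
proof -
  have "(\<Prod>j = 0..<r. c j * a ^ g j / a ^ d j) = (\<Prod>j = 0..<r. c j) * a ^ sum g {0..<r} / a ^ (N + KL)"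
    unfolding assms(2) by (simp add: prod.distrib prod_dividef power_sum)
  also have "\<dots> = (\<Prod>j = 0..<r. c j) * a ^ (sum g {0..<r} - KL) / a ^ N"
    using assms(1,3) by (simp add: power_diff power_add)
  finally show ?thesis .
qed

lemma tendsto_scaled_higher_deriv_power_sum:
  fixes c :: "real \<Rightarrow> nat \<Rightarrow> real"
  assumes "\<And>t. t \<le> d \<Longrightarrow> ((\<lambda>a. c a t * a ^ t / a ^ d) \<longlongrightarrow> \<gamma> t) at_infinity"
  shows "((\<lambda>a. (deriv ^^ u) (\<lambda>y. \<Sum>t\<le>d. c a t * y ^ t) (a * x) * a ^ u / a ^ d) \<longlongrightarrow>
      (\<Sum>t\<le>d. \<gamma> t * ffact (real t) u * x ^ (t - u))) at_infinity"
proof -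
  have term_eq: "(c a t * ffact (real t) u * (a * x) ^ (t - u)) * a ^ u / a ^ d =
      (c a t * a ^ t / a ^ d) * ffact (real t) u * x ^ (t - u)" for a t
  proof (cases "u \<le> t")
    case True
    then have "(a * x) ^ (t - u) * a ^ u = a ^ t * x ^ (t - u)"
      by (simp add: power_mult_distrib power_add[symmetric])
    then show ?thesis
      by (simp only: mult.assoc) (simp add: mult_ac)
  qed (simp add: ffact_of_nat_eq_0)
  have "(deriv ^^ u) (\<lambda>y. \<Sum>t\<le>d. c a t * y ^ t) (a * x) * a ^ u / a ^ d =
      (\<Sum>t\<le>d. (c a t * ffact (real t) u * (a * x) ^ (t - u)) * a ^ u / a ^ d)" for a
    by (simp add: higher_deriv_power_sum sum_distrib_right sum_divide_distrib)
  then have "(deriv ^^ u) (\<lambda>y. \<Sum>t\<le>d. c a t * y ^ t) (a * x) * a ^ u / a ^ d =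
      (\<Sum>t\<le>d. (c a t * a ^ t / a ^ d) * ffact (real t) u * x ^ (t - u))" for a
    by (simp only: term_eq)
  moreover have "((\<lambda>a. \<Sum>t\<le>d. (c a t * a ^ t / a ^ d) * ffact (real t) u * x ^ (t - u)) \<longlongrightarrow>
      (\<Sum>t\<le>d. \<gamma> t * ffact (real t) u * x ^ (t - u))) at_infinity"
    by (intro tendsto_sum tendsto_mult tendsto_const assms) simp
  ultimately show ?thesis
    by simp
qed

lemma tendsto_cross_ratio:
  assumes "length xs = length xs'" "length ys = length ys'"
  shows "((\<lambda>a. cross xs (map (\<lambda>z. z - a) ys) / cross xs' (map (\<lambda>z. z - a) ys')) \<longlongrightarrow> 1) at_infinity"
proof -
  have "cross xs (map (\<lambda>z. z - a) ys) / cross xs' (map (\<lambda>z. z - a) ys') =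
      (\<Prod>j<length ys. \<Prod>i<length xs. ((ys ! j - xs ! i) - a) / ((ys' ! j - xs' ! i) - a))" for a
    using assms by (simp add: cross_def prod_dividef algebra_simps)
  moreover have "((\<lambda>a. \<Prod>j<length ys. \<Prod>i<length xs. ((ys ! j - xs ! i) - a) / ((ys' ! j - xs' ! i) - a)) \<longlongrightarrow>
      (\<Prod>j<length ys. \<Prod>i<length xs. 1)) at_infinity"
    by (intro tendsto_prod tendsto_diff_div_diff_at_infinity)
  ultimately show ?thesis
    by simp
qed

section \<open>Laguerre polynomials and degree vectors\<close>

definition lag_coeff :: "real \<Rightarrow> nat \<Rightarrow> nat \<Rightarrow> real" where
  "lag_coeff a n t = (-1) ^ (n - t) * (fact n / fact t) * ((real n + a) gchoose (n - t))"

lemma lag_hat_eq_sum: "lag_hat a n y = (\<Sum>t\<le>n. lag_coeff a n t * y ^ t)"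
  by (simp add: lag_hat_def lag_coeff_def)

lemma lag_hat_uminus_eq_sum: "lag_hat a n (- y) = (\<Sum>t\<le>n. ((-1) ^ t * lag_coeff a n t) * y ^ t)"
  unfolding lag_hat_eq_sum by (simp add: power_minus[of y] mult_ac)

lemma tendsto_lag_coeff:
  assumes "t \<le> n"
  shows "((\<lambda>a. lag_coeff (s * a) n t * a ^ t / a ^ n) \<longlongrightarrow> real (n choose t) * (- s) ^ (n - t)) at_infinity"
proof -
  have ev: "eventually (\<lambda>a. (-1) ^ (n - t) * (fact n / fact t) * (((real n + s * a) gchoose (n - t)) / a ^ (n - t)) =
      lag_coeff (s * a) n t * a ^ t / a ^ n) at_infinity"
  proof (rule eventually_mono[OF eventually_nonzero_at_infinity])
    fix a :: real
    assume "a \<noteq> 0"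
    moreover have "a ^ n = a ^ t * a ^ (n - t)"
      using assms by (simp add: power_add[symmetric])
    ultimately show "(-1) ^ (n - t) * (fact n / fact t) * (((real n + s * a) gchoose (n - t)) / a ^ (n - t)) =
      lag_coeff (s * a) n t * a ^ t / a ^ n"
      by (simp add: lag_coeff_def)
  qed
  moreover have "((\<lambda>a. (-1) ^ (n - t) * (fact n / fact t) * (((real n + s * a) gchoose (n - t)) / a ^ (n - t)))
      \<longlongrightarrow> (-1) ^ (n - t) * (fact n / fact t) * (s ^ (n - t) / fact (n - t))) at_infinity"
    by (intro tendsto_mult tendsto_const tendsto_gchoose_div_power)
  moreover have "(-1) ^ (n - t) * (fact n / fact t) * (s ^ (n - t) / fact (n - t)) = real (n choose t) * (- s) ^ (n - t)"
    using assms by (simp add: binomial_fact power_minus[of s] field_simps)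
  ultimately show ?thesis
    using tendsto_cong[OF ev] by simp
qed

lemma tendsto_scaled_higher_deriv_lag_hat:
  "((\<lambda>a. (deriv ^^ u) (lag_hat a n) (a * x) * a ^ u / a ^ n) \<longlongrightarrow> ffact (real n) u * (x - 1) ^ (n - u)) at_infinity"
  using tendsto_scaled_higher_deriv_power_sum[of n "\<lambda>a t. lag_coeff a n t" "\<lambda>t. real (n choose t) * (- 1) ^ (n - t)" u x]
    tendsto_lag_coeff[of _ n 1]
  by (simp add: lag_hat_eq_sum[abs_def] sum_binomial_ffact_power[of n 1, simplified])

lemma tendsto_scaled_higher_deriv_lag_hat_uminus:
  "((\<lambda>a. (deriv ^^ u) (\<lambda>y. lag_hat a m (- y)) (a * x) * a ^ u / a ^ m) \<longlongrightarrow>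
    (-1) ^ m * (ffact (real m) u * (x + 1) ^ (m - u))) at_infinity"
proof -
  have "((\<lambda>a. (-1) ^ t * lag_coeff a m t * a ^ t / a ^ m) \<longlongrightarrow> (-1) ^ m * (real (m choose t) * 1 ^ (m - t))) at_infinity"
    if "t \<le> m" for t
  proof -
    have "((\<lambda>a. (-1) ^ t * (lag_coeff (1 * a) m t * a ^ t / a ^ m)) \<longlongrightarrow> (-1) ^ t * (real (m choose t) * (- 1) ^ (m - t))) at_infinity"
      by (intro tendsto_mult tendsto_const tendsto_lag_coeff that)
    moreover have "(-1::real) ^ t * (- 1) ^ (m - t) = (-1) ^ m"
      using that by (simp add: power_add[symmetric])
    ultimately show ?thesis
      by (simp add: mult_ac)
  qed
  then have "((\<lambda>a. (deriv ^^ u) (\<lambda>y. \<Sum>t\<le>m. ((-1) ^ t * lag_coeff a m t) * y ^ t) (a * x) * a ^ u / a ^ m) \<longlongrightarrow>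
      (\<Sum>t\<le>m. (-1) ^ m * (real (m choose t) * (- (- 1)) ^ (m - t)) * ffact (real t) u * x ^ (t - u))) at_infinity"
    by (intro tendsto_scaled_higher_deriv_power_sum) simp
  also have "(\<Sum>t\<le>m. (-1) ^ m * (real (m choose t) * (- (- 1)) ^ (m - t)) * ffact (real t) u * x ^ (t - u)) =
      (-1) ^ m * (\<Sum>t\<le>m. real (m choose t) * (- (- 1)) ^ (m - t) * ffact (real t) u * x ^ (t - u))"
    by (simp only: sum_distrib_left mult.assoc)
  also have "\<dots> = (-1) ^ m * (ffact (real m) u * (x + 1) ^ (m - u))"
    by (simp only: sum_binomial_ffact_power) simp
  finally show ?thesis
    by (simp add: lag_hat_uminus_eq_sum)
qed

lemma length_degvec [simp]: "length (degvec lam) = length lam"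
  by (simp add: degvec_def)

lemma distinct_degvec:
  assumes "is_partition lam"
  shows "distinct (degvec lam)"
proof -
  have "degvec lam ! j < degvec lam ! i" if "i < j" "j < length lam" for i j
  proof -
    have "lam ! j \<le> lam ! i"
      using assms that unfolding is_partition_def by (auto simp: sorted_wrt_iff_nth_less)
    then show ?thesis
      using that by (simp add: degvec_def)
  qed
  then show ?thesis
    unfolding distinct_conv_nth by (metis length_degvec linorder_neqE_nat less_irrefl)
qed

lemma vdm_degvec_nonzero: "is_partition lam \<Longrightarrow> vdm (map real (degvec lam)) \<noteq> 0"
  by (simp add: vdm_eq_0_iff distinct_map distinct_degvec)

lemma sum_list_degvec: "sum_list (degvec lam) = psize lam + (\<Sum>i<length lam. i)"
proof -
  have "sum_list (degvec lam) = (\<Sum>i<length lam. lam ! i + (length lam - Suc i))"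
    by (simp add: degvec_def sum_list_sum_nth atLeast0LessThan)
  also have "\<dots> = (\<Sum>i<length lam. lam ! i) + (\<Sum>i<length lam. length lam - Suc i)"
    by (subst sum.distrib[symmetric]) (rule sum.cong; simp)
  also have "(\<Sum>i<length lam. length lam - Suc i) = (\<Sum>i<length lam. i)"
    using sum.nat_diff_reindex[of "\<lambda>i. i" "length lam"] by simp
  finally show ?thesis
    by (simp add: psize_def sum_list_sum_nth atLeast0LessThan)
qed

section \<open>The limit of the Wronskian Omega\<close>

(* Up to the factor e^y in its last l columns, column j of the Wronskian matrix of Omega is the sum
   over u of the u-th derivative of its polynomial part times the column (leibniz_coeff k j u i)_i:
   a unit vector for the first k columns, binomial weights (Leibniz rule) for the others. *)
definition leibniz_coeff :: "nat \<Rightarrow> nat \<Rightarrow> nat \<Rightarrow> nat \<Rightarrow> real" where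
  "leibniz_coeff k j u i = (if j < k then (if i = u then 1 else 0) else real (i choose u))"

definition leibniz_det :: "nat \<Rightarrow> nat \<Rightarrow> (nat \<Rightarrow> nat) \<Rightarrow> real" where
  "leibniz_det k r g = Determinant.det (mat r r (\<lambda>(i,j). leibniz_coeff k j (g j) i))"

lemma leibniz_det_eq_0:
  assumes "k \<le> r" "\<not> (inj_on g {0..<k} \<and> inj_on g {k..<r})"
  shows "leibniz_det k r g = 0"
proof -
  have "\<exists>j1 j2. j1 \<noteq> j2 \<and> j1 < r \<and> j2 < r \<and> g j1 = g j2 \<and> (j1 < k \<longleftrightarrow> j2 < k)"
  proof (cases "inj_on g {0..<k}")
    case True
    then obtain j1 j2 where "j1 \<in> {k..<r}" "j2 \<in> {k..<r}" "g j1 = g j2" "j1 \<noteq> j2"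
      using assms(2) unfolding inj_on_def by blast
    then show ?thesis
      by (intro exI[of _ j1] exI[of _ j2]) auto
  next
    case False
    then obtain j1 j2 where "j1 \<in> {0..<k}" "j2 \<in> {0..<k}" "g j1 = g j2" "j1 \<noteq> j2"
      unfolding inj_on_def by blast
    then show ?thesis
      using assms(1) by (intro exI[of _ j1] exI[of _ j2]) auto
  qed
  then obtain j1 j2 where j: "j1 \<noteq> j2" "j1 < r" "j2 < r" "g j1 = g j2" "j1 < k \<longleftrightarrow> j2 < k"
    by blast
  have "leibniz_coeff k j1 = leibniz_coeff k j2"
    using j(5) by (simp add: leibniz_coeff_def fun_eq_iff)
  then have "col (mat r r (\<lambda>(i,j). leibniz_coeff k j (g j) i)) j1 = col (mat r r (\<lambda>(i,j). leibniz_coeff k j (g j) i)) j2"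
    using j by simp
  then show ?thesis
    unfolding leibniz_det_def using j by (intro det_identical_columns[of _ r j1 j2]) simp_all
qed

lemma det_mat_leibniz_blocks:
  fixes L :: "nat \<Rightarrow> nat \<Rightarrow> real"
  shows "Determinant.det (mat (k + l) (k + l) (\<lambda>(i,j). \<Sum>u\<in>{..<(if j < k then k else l)}. L j u * leibniz_coeff k j u i)) =
    Determinant.det (mat k k (\<lambda>(i,j). L j i)) * Determinant.det (mat l l (\<lambda>(i,j). L (k + j) i))"
    (is "Determinant.det ?M = _")
proof -
  define A where "A = mat k k (\<lambda>(i,j). L j i)"
  define B where "B = mat k l (\<lambda>(i,j). \<Sum>u<l. L (k + j) u * real (i choose u))"
  define D where "D = mat l l (\<lambda>(i,j). \<Sum>u<l. L (k + j) u * real ((k + i) choose u))"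
  have "?M = four_block_mat A B (0\<^sub>m l k) D"
  proof (rule eq_matI)
    fix i j
    assume "i < dim_row (four_block_mat A B (0\<^sub>m l k) D)" "j < dim_col (four_block_mat A B (0\<^sub>m l k) D)"
    then have ij: "i < k + l" "j < k + l"
      by (simp_all add: A_def D_def)
    show "?M $$ (i, j) = four_block_mat A B (0\<^sub>m l k) D $$ (i, j)"
    proof (cases "j < k")
      case True
      have "(\<Sum>u<k. L j u * leibniz_coeff k j u i) = (\<Sum>u<k. if u = i then L j i else 0)"
        using True by (intro sum.cong) (auto simp: leibniz_coeff_def)
      then show ?thesis
        using True ij by (simp add: A_def B_def D_def)
    next
      case False
      then show ?thesis
        using ij by (simp add: A_def B_def D_def leibniz_coeff_def)
    qed
  qed (simp_all add: A_def D_def)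
  also have "Determinant.det (four_block_mat A B (0\<^sub>m l k) D) = Determinant.det A * Determinant.det D"
    by (rule det_four_block_mat_lower_left_zero) (auto simp: A_def B_def D_def)
  finally show ?thesis
    using det_mat_mult_binomial_shift[of l "\<lambda>j u. L (k + j) u" k] by (simp add: A_def D_def)
qed

lemma sum_leibniz_det_minimal:
  fixes L :: "nat \<Rightarrow> nat \<Rightarrow> real" and k l :: nat
  defines "r \<equiv> k + l" and "KL \<equiv> (\<Sum>i<k. i) + (\<Sum>i<l. i)"
  shows "(\<Sum>g\<in>PiE {0..<r} (\<lambda>_. {..<r}). (\<Prod>j = 0..<r. L j (g j)) * leibniz_det k r g * (if sum g {0..<r} = KL then 1 else 0)) =
    Determinant.det (mat k k (\<lambda>(i,j). L j i)) * Determinant.det (mat l l (\<lambda>(i,j). L (k + j) i))"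
proof -
  \<comment> \<open>The minimal index maps are those sending each block into its own initial segment, so the
      sum is again a multilinear expansion.\<close>
  define U where "U j = {..<(if j < k then k else l)}" for j
  have sub: "PiE {0..<r} U \<subseteq> PiE {0..<r} (\<lambda>_. {..<r})"
    by (rule PiE_mono) (auto simp: U_def r_def)
  have minimal: "sum g {0..<r} = KL \<longleftrightarrow> g \<in> PiE {0..<r} U"
    if "g \<in> PiE {0..<r} (\<lambda>_. {..<r})" "leibniz_det k r g \<noteq> 0" for g
  proof -
    have "inj_on g {0..<k}" "inj_on g {k..<k + l}"
      using leibniz_det_eq_0[of k r g] that(2) by (auto simp: r_def)
    then have "sum g {0..<k + l} = KL \<longleftrightarrow> (\<forall>j\<in>{0..<k}. g j < k) \<and> (\<forall>j\<in>{k..<k + l}. g j < l)"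
      unfolding KL_def by (rule sum_eq_if_inj_on_blocks_iff)
    then show ?thesis
      using that(1) by (auto simp: U_def PiE_iff r_def)
  qed
  have "(\<Sum>g\<in>PiE {0..<r} (\<lambda>_. {..<r}). (\<Prod>j = 0..<r. L j (g j)) * leibniz_det k r g * (if sum g {0..<r} = KL then 1 else 0)) =
      (\<Sum>g\<in>PiE {0..<r} (\<lambda>_. {..<r}). if g \<in> PiE {0..<r} U then (\<Prod>j = 0..<r. L j (g j)) * leibniz_det k r g else 0)"
  proof (rule sum.cong[OF refl])
    fix g
    assume "g \<in> PiE {0..<r} (\<lambda>_. {..<r})"
    then show "(\<Prod>j = 0..<r. L j (g j)) * leibniz_det k r g * (if sum g {0..<r} = KL then 1 else 0) =
        (if g \<in> PiE {0..<r} U then (\<Prod>j = 0..<r. L j (g j)) * leibniz_det k r g else 0)"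
      by (cases "leibniz_det k r g = 0") (simp_all add: minimal)
  qed
  also have "\<dots> = (\<Sum>g\<in>PiE {0..<r} U. (\<Prod>j = 0..<r. L j (g j)) * leibniz_det k r g)"
    using sub by (intro sum.mono_neutral_cong_right) (auto simp: finite_PiE)
  also have "\<dots> = Determinant.det (mat r r (\<lambda>(i,j). \<Sum>u\<in>U j. L j u * leibniz_coeff k j u i))"
    unfolding leibniz_det_def by (rule det_mat_multilinear_cols[symmetric]) (simp add: U_def)
  finally show ?thesis
    using det_mat_leibniz_blocks[of k l L] by (simp add: U_def r_def)
qed

definition omega_poly :: "real \<Rightarrow> nat list \<Rightarrow> nat list \<Rightarrow> nat \<Rightarrow> real \<Rightarrow> real" where
  "omega_poly a ns ms j =
     (if j < length ns then lag_hat a (ns ! j) else (\<lambda>y. lag_hat a (ms ! (j - length ns)) (- y)))"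

lemma omega_wronskian_eq_sum:
  fixes ns ms :: "nat list"
  defines "k \<equiv> length ns" and "r \<equiv> length ns + length ms"
  shows "exp (- real (length ms) * y) *
      wronskian (map (lag_hat a) ns @ map (\<lambda>m y. exp y * lag_hat a m (- y)) ms) y =
    (\<Sum>g\<in>PiE {0..<r} (\<lambda>_. {..<r}). (\<Prod>j = 0..<r. (deriv ^^ g j) (omega_poly a ns ms j) y) * leibniz_det k r g)"
proof -
  define fs where "fs = map (lag_hat a) ns @ map (\<lambda>m y. exp y * lag_hat a m (- y)) ms"
  define E where "E j = (if j < k then 1 else exp y)" for j
  have entry: "(deriv ^^ i) (fs ! j) y = (\<Sum>u<r. (deriv ^^ u) (omega_poly a ns ms j) y * leibniz_coeff k j u i) * E j"
    if "i < r" "j < r" for i j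
  proof (cases "j < k")
    case True
    have "(\<Sum>u<r. (deriv ^^ u) (omega_poly a ns ms j) y * leibniz_coeff k j u i) =
        (\<Sum>u<r. if u = i then (deriv ^^ i) (omega_poly a ns ms j) y else 0)"
      using True by (intro sum.cong) (auto simp: leibniz_coeff_def)
    then show ?thesis
      using True that by (simp add: fs_def nth_append omega_poly_def E_def k_def)
  next
    case False
    define m where "m = ms ! (j - k)"
    have "fs ! j = (\<lambda>z. exp z * (\<Sum>t\<le>m. ((-1) ^ t * lag_coeff a m t) * z ^ t))"
      "omega_poly a ns ms j = (\<lambda>z. \<Sum>t\<le>m. ((-1) ^ t * lag_coeff a m t) * z ^ t)"
      using False that by (simp_all add: fs_def nth_append omega_poly_def m_def k_def r_def lag_hat_uminus_eq_sum)
    moreover have "(\<Sum>u\<le>i. real (i choose u) * h u) = (\<Sum>u<r. h u * real (i choose u))" for h :: "nat \<Rightarrow> real"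
      using that by (intro sum.mono_neutral_cong_left) auto
    ultimately show ?thesis
      using False by (simp add: higher_deriv_exp_mult_power_sum leibniz_coeff_def E_def)
  qed
  have "wronskian fs y = Determinant.det (mat r r (\<lambda>(i,j). (\<Sum>u<r. (deriv ^^ u) (omega_poly a ns ms j) y * leibniz_coeff k j u i) * E j))"
    unfolding wronskian_eq_det using entry
    by (intro arg_cong[where f = Determinant.det] cong_mat) (simp_all add: fs_def r_def)
  also have "\<dots> = (\<Prod>j = 0..<r. E j) * (\<Sum>g\<in>PiE {0..<r} (\<lambda>_. {..<r}). (\<Prod>j = 0..<r. (deriv ^^ g j) (omega_poly a ns ms j) y) * leibniz_det k r g)"
    unfolding det_mat_scale_cols leibniz_det_def by (subst det_mat_multilinear_cols) simp_all
  also have "(\<Prod>j = 0..<r. E j) = exp y ^ length ms"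
    using prod.atLeastLessThan_concat[of 0 k r E] by (simp add: E_def k_def r_def)
  finally show ?thesis
    by (simp add: fs_def exp_minus exp_of_nat_mult[symmetric])
qed

definition omega_lim :: "nat list \<Rightarrow> nat list \<Rightarrow> real \<Rightarrow> nat \<Rightarrow> nat \<Rightarrow> real" where
  "omega_lim ns ms x j u =
     (if j < length ns then ffact (real (ns ! j)) u * (x - 1) ^ (ns ! j - u)
      else (-1) ^ (ms ! (j - length ns)) *
        (ffact (real (ms ! (j - length ns))) u * (x + 1) ^ (ms ! (j - length ns) - u)))"

lemma tendsto_scaled_higher_deriv_omega_poly:
  assumes "j < length ns + length ms"
  shows "((\<lambda>a. (deriv ^^ u) (omega_poly a ns ms j) (a * x) * a ^ u / a ^ ((ns @ ms) ! j)) \<longlongrightarrow>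
    omega_lim ns ms x j u) at_infinity"
  using tendsto_scaled_higher_deriv_lag_hat tendsto_scaled_higher_deriv_lag_hat_uminus assms
  by (cases "j < length ns") (simp_all add: omega_poly_def omega_lim_def nth_append)

lemma det_omega_lim_blocks:
  "Determinant.det (mat (length ns) (length ns) (\<lambda>(i,j). omega_lim ns ms x j i)) =
    vdm (map real ns) * (x - 1) ^ (sum_list ns - (\<Sum>i<length ns. i))"
  "Determinant.det (mat (length ms) (length ms) (\<lambda>(i,j). omega_lim ns ms x (length ns + j) i)) =
    (-1) ^ sum_list ms * (vdm (map real ms) * (x + 1) ^ (sum_list ms - (\<Sum>i<length ms. i)))"
proof -
  have "mat (length ns) (length ns) (\<lambda>(i,j). omega_lim ns ms x j i) =
      mat (length ns) (length ns) (\<lambda>(i,j). ffact (real (ns ! j)) i * (x - 1) ^ (ns ! j - i))"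
    by (rule cong_mat) (simp_all add: omega_lim_def)
  then show "Determinant.det (mat (length ns) (length ns) (\<lambda>(i,j). omega_lim ns ms x j i)) =
      vdm (map real ns) * (x - 1) ^ (sum_list ns - (\<Sum>i<length ns. i))"
    by (simp add: det_mat_ffact_power_list)
  have "(\<Prod>j = 0..<length ms. (-1::real) ^ (ms ! j)) = (-1) ^ sum_list ms"
    by (simp add: power_sum[symmetric] sum_list_sum_nth)
  then show "Determinant.det (mat (length ms) (length ms) (\<lambda>(i,j). omega_lim ns ms x (length ns + j) i)) =
      (-1) ^ sum_list ms * (vdm (map real ms) * (x + 1) ^ (sum_list ms - (\<Sum>i<length ms. i)))"
    using det_mat_scale_cols[of "length ms" "\<lambda>i j. ffact (real (ms ! j)) i * (x + 1) ^ (ms ! j - i)" "\<lambda>j. (-1) ^ (ms ! j)"]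
      det_mat_ffact_power_list[of ms "x + 1"]
    by (simp add: omega_lim_def mult.commute)
qed

lemma tendsto_omega_term:
  fixes ns ms :: "nat list" and g :: "nat \<Rightarrow> nat"
  defines "k \<equiv> length ns" and "r \<equiv> length ns + length ms" and "KL \<equiv> (\<Sum>i<length ns. i) + (\<Sum>i<length ms. i)"
  assumes degree: "sum_list ns + sum_list ms = N + KL"
  shows "((\<lambda>a. (\<Prod>j = 0..<r. (deriv ^^ g j) (omega_poly a ns ms j) (a * x)) * leibniz_det k r g / a ^ N) \<longlongrightarrow>
    (\<Prod>j = 0..<r. omega_lim ns ms x j (g j)) * leibniz_det k r g * (if sum g {0..<r} = KL then 1 else 0)) at_infinity"
    (is "(?T \<longlongrightarrow> _) _")
proof (cases "leibniz_det k r g = 0")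
  case True
  then show ?thesis by simp
next
  case False
  define S where "S a = (\<Prod>j = 0..<r. (deriv ^^ g j) (omega_poly a ns ms j) (a * x) * a ^ g j / a ^ ((ns @ ms) ! j)) *
      leibniz_det k r g * (a ^ KL / a ^ sum g {0..<r})" for a :: real
  have "inj_on g {0..<k}" "inj_on g {k..<k + length ms}"
    using leibniz_det_eq_0[of k r g] False by (auto simp: r_def k_def)
  then have KL_le: "KL \<le> sum g {0..<r}"
    using sum_ge_if_inj_on_blocks by (simp add: KL_def r_def k_def)
  have degree_sum: "N + KL = (\<Sum>j = 0..<r. (ns @ ms) ! j)"
    using degree sum_list_sum_nth[of "ns @ ms"] by (simp add: r_def)
  have "(S \<longlongrightarrow> (\<Prod>j = 0..<r. omega_lim ns ms x j (g j)) * leibniz_det k r g * (if sum g {0..<r} = KL then 1 else 0)) at_infinity"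
    unfolding S_def
    by (intro tendsto_mult tendsto_const tendsto_prod tendsto_power_div_power_at_infinity[OF KL_le]
        tendsto_scaled_higher_deriv_omega_poly) (simp add: r_def)
  moreover have "eventually (\<lambda>a. S a = ?T a) at_infinity"
  proof (rule eventually_mono[OF eventually_nonzero_at_infinity])
    fix a :: real
    assume "a \<noteq> 0"
    then show "S a = ?T a"
      unfolding S_def prod_mult_power_div_power[OF \<open>a \<noteq> 0\<close> degree_sum KL_le]
      by (simp add: power_diff[OF \<open>a \<noteq> 0\<close> KL_le])
  qed
  ultimately show ?thesis
    by (rule Lim_transform_eventually)
qed

theorem tendsto_omega_mn:
  assumes mu: "is_partition mu" and nu: "is_partition nu"
  shows "((\<lambda>a. omega_mn a mu nu (a * x) / a ^ (psize mu + psize nu)) \<longlongrightarrow>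
    (x - 1) ^ psize mu * (x + 1) ^ psize nu) at_infinity"
proof -
  define ns ms where "ns = degvec mu" and "ms = degvec nu"
  define k r where "k = length ns" and "r = length ns + length ms"
  define KL N where "KL = (\<Sum>i<length ns. i) + (\<Sum>i<length ms. i)" and "N = psize mu + psize nu"
  define \<kappa> where "\<kappa> = (-1) ^ sum_list ms / (vdm (map real ns) * vdm (map real ms))"
  have degree: "sum_list ns + sum_list ms = N + KL"
    by (simp add: ns_def ms_def N_def KL_def sum_list_degvec)
  have "omega_mn a mu nu (a * x) / a ^ N = \<kappa> * (\<Sum>g\<in>PiE {0..<r} (\<lambda>_. {..<r}).
      (\<Prod>j = 0..<r. (deriv ^^ g j) (omega_poly a ns ms j) (a * x)) * leibniz_det k r g / a ^ N)" for a
    using omega_wronskian_eq_sum[of ms "a * x" a ns]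
    by (simp add: omega_mn_def \<kappa>_def ns_def ms_def k_def r_def sum_divide_distrib[symmetric] mult.assoc)
  moreover have "((\<lambda>a. \<kappa> * (\<Sum>g\<in>PiE {0..<r} (\<lambda>_. {..<r}).
      (\<Prod>j = 0..<r. (deriv ^^ g j) (omega_poly a ns ms j) (a * x)) * leibniz_det k r g / a ^ N)) \<longlongrightarrow>
      \<kappa> * (\<Sum>g\<in>PiE {0..<r} (\<lambda>_. {..<r}). (\<Prod>j = 0..<r. omega_lim ns ms x j (g j)) * leibniz_det k r g *
        (if sum g {0..<r} = KL then 1 else 0))) at_infinity"
    unfolding k_def r_def KL_def by (intro tendsto_intros tendsto_omega_term degree[unfolded KL_def])
  moreover have "\<kappa> * (\<Sum>g\<in>PiE {0..<r} (\<lambda>_. {..<r}). (\<Prod>j = 0..<r. omega_lim ns ms x j (g j)) * leibniz_det k r g *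
        (if sum g {0..<r} = KL then 1 else 0)) = (x - 1) ^ psize mu * (x + 1) ^ psize nu"
    using vdm_degvec_nonzero[OF mu] vdm_degvec_nonzero[OF nu]
    unfolding k_def r_def KL_def sum_leibniz_det_minimal det_omega_lim_blocks
    by (simp add: \<kappa>_def ns_def ms_def sum_list_degvec power_add[symmetric] field_simps)
  ultimately show ?thesis
    by (simp add: N_def)
qed

section \<open>The limit of the Wronskian L\<close>

(* On y > 0 column j of the Wronskian matrix of L is the sum over u of lag_col_coeff ns ms a j u
   times the power of y with exponent lag_exponent k a j u. *)
definition lag_exponent :: "nat \<Rightarrow> real \<Rightarrow> nat \<Rightarrow> nat \<Rightarrow> real" where
  "lag_exponent k a j u = (if j < k then real u else real u - a)"

definition lag_col_coeff :: "nat list \<Rightarrow> nat list \<Rightarrow> real \<Rightarrow> nat \<Rightarrow> nat \<Rightarrow> real" where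
  "lag_col_coeff ns ms a j u =
     (if j < length ns then lag_coeff a (ns ! j) u else lag_coeff (- a) (ms ! (j - length ns)) u)"

definition lag_poly :: "nat list \<Rightarrow> nat list \<Rightarrow> real \<Rightarrow> real poly" where
  "lag_poly ns ms a = (\<Sum>g\<in>PiE {0..<length ns + length ms} (\<lambda>j. {..(ns @ ms) ! j}).
     monom ((\<Prod>j = 0..<length ns + length ms. lag_col_coeff ns ms a j (g j)) *
             vdm (map (\<lambda>j. lag_exponent (length ns) a j (g j)) [0..<length ns + length ms]) /
             vdm (map real ns @ map (\<lambda>m. real m - a) ms))
       (sum g {0..<length ns + length ms} - ((\<Sum>i<length ns. i) + (\<Sum>i<length ms. i))))"

lemma higher_deriv_lag_col:
  fixes a y :: real
  assumes y: "y > 0" and j: "j < length ns + length ms"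
  shows "(deriv ^^ i) ((map (lag_hat a) ns @ map (\<lambda>m y. y powr (- a) * lag_hat (- a) m y) ms) ! j) y =
    (\<Sum>u\<le>(ns @ ms) ! j. lag_col_coeff ns ms a j u *
      (ffact (lag_exponent (length ns) a j u) i * y powr (lag_exponent (length ns) a j u - real i)))"
proof -
  have "((map (lag_hat a) ns @ map (\<lambda>m y. y powr (- a) * lag_hat (- a) m y) ms) ! j) z =
      (\<Sum>u\<le>(ns @ ms) ! j. lag_col_coeff ns ms a j u * z powr lag_exponent (length ns) a j u)" if "z > 0" for z
  proof (cases "j < length ns")
    case True
    then show ?thesis
      using that by (simp add: nth_append lag_hat_eq_sum lag_col_coeff_def lag_exponent_def powr_realpow)
  next
    case False
    have shift: "z powr (- a) * (c * z ^ u) = c * z powr (real u - a)" for c u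
      using that by (simp add: powr_realpow[symmetric] powr_add[symmetric])
    show ?thesis
      using False j by (simp add: nth_append lag_hat_eq_sum lag_col_coeff_def lag_exponent_def sum_distrib_left shift)
  qed
  then show ?thesis
    by (simp add: higher_deriv_powr_sum[OF y] mult.assoc)
qed

lemma wronskian_lag_eq_sum:
  fixes a y :: real and ns ms :: "nat list"
  assumes y: "y > 0"
  defines "k \<equiv> length ns" and "r \<equiv> length ns + length ms"
  shows "wronskian (map (lag_hat a) ns @ map (\<lambda>m y. y powr (- a) * lag_hat (- a) m y) ms) y =
    (\<Sum>g\<in>PiE {0..<r} (\<lambda>j. {..(ns @ ms) ! j}). (\<Prod>j = 0..<r. lag_col_coeff ns ms a j (g j)) *
       (y powr ((\<Sum>j = 0..<r. lag_exponent k a j (g j)) - (\<Sum>i = 0..<r. real i)) *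
        vdm (map (\<lambda>j. lag_exponent k a j (g j)) [0..<r])))"
proof -
  define fs where "fs = map (lag_hat a) ns @ map (\<lambda>m y. y powr (- a) * lag_hat (- a) m y) ms"
  have "length fs = r"
    by (simp add: fs_def r_def)
  moreover have "(deriv ^^ i) (fs ! j) y = (\<Sum>u\<in>{..(ns @ ms) ! j}. lag_col_coeff ns ms a j u *
      (ffact (lag_exponent k a j u) i * y powr (lag_exponent k a j u - real i)))" if "j < r" for i j
    unfolding fs_def k_def by (rule higher_deriv_lag_col[OF y]) (use that in \<open>simp add: r_def\<close>)
  ultimately have "wronskian fs y =
      Determinant.det (mat r r (\<lambda>(i,j). \<Sum>u\<in>{..(ns @ ms) ! j}. lag_col_coeff ns ms a j u *
        (ffact (lag_exponent k a j u) i * y powr (lag_exponent k a j u - real i))))"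
    unfolding wronskian_eq_det by (intro arg_cong[where f = Determinant.det] cong_mat) simp_all
  also have "\<dots> = (\<Sum>g\<in>PiE {0..<r} (\<lambda>j. {..(ns @ ms) ! j}). (\<Prod>j = 0..<r. lag_col_coeff ns ms a j (g j)) *
      Determinant.det (mat r r (\<lambda>(i,j). ffact (lag_exponent k a j (g j)) i * y powr (lag_exponent k a j (g j) - real i))))"
    by (rule det_mat_multilinear_cols) simp
  finally show ?thesis
    by (simp add: fs_def det_mat_ffact_powr[OF y])
qed

lemma sum_lag_exponent:
  "(\<Sum>j = 0..<k + l. lag_exponent k a j (g j)) = real (sum g {0..<k + l}) - a * real l"
proof -
  have "(\<Sum>j = 0..<k + l. lag_exponent k a j (g j)) = (\<Sum>j = 0..<k + l. real (g j)) - (\<Sum>j = k..<k + l. a)"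
    unfolding lag_exponent_def sum_split_blocks[of "\<lambda>j. if j < k then real (g j) else real (g j) - a"]
      sum_split_blocks[of "\<lambda>j. real (g j)"]
    by (simp add: sum_subtractf)
  then show ?thesis
    by simp
qed

lemma inj_on_blocks_if_vdm_lag_exponent_nonzero:
  assumes "vdm (map (\<lambda>j. lag_exponent k a j (g j)) [0..<k + l]) \<noteq> 0"
  shows "inj_on g {0..<k}" "inj_on g {k..<k + l}"
proof -
  have inj: "inj_on (\<lambda>j. lag_exponent k a j (g j)) {0..<k + l}"
    using assms by (simp add: vdm_eq_0_iff distinct_map)
  show "inj_on g {0..<k}"
  proof (rule inj_onI)
    fix j1 j2
    assume "j1 \<in> {0..<k}" "j2 \<in> {0..<k}" "g j1 = g j2"
    then show "j1 = j2"
      using inj_onD[OF inj, of j1 j2] by (simp add: lag_exponent_def)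
  qed
  show "inj_on g {k..<k + l}"
  proof (rule inj_onI)
    fix j1 j2
    assume "j1 \<in> {k..<k + l}" "j2 \<in> {k..<k + l}" "g j1 = g j2"
    then show "j1 = j2"
      using inj_onD[OF inj, of j1 j2] by (simp add: lag_exponent_def)
  qed
qed

lemma lag_formula_eq_poly:
  fixes a y :: real
  assumes y: "y > 0"
  shows "y powr ((real (length ns) + a) * real (length ms)) / vdm (map real ns @ map (\<lambda>m. real m - a) ms) *
     wronskian (map (lag_hat a) ns @ map (\<lambda>m y. y powr (- a) * lag_hat (- a) m y) ms) y =
     poly (lag_poly ns ms a) y"
proof -
  define k l r where "k = length ns" and "l = length ms" and "r = length ns + length ms"
  define KL where "KL = (\<Sum>i<k. i) + (\<Sum>i<l. i)"
  define D where "D = vdm (map real ns @ map (\<lambda>m. real m - a) ms)"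
  define V where "V g = vdm (map (\<lambda>j. lag_exponent k a j (g j)) [0..<r])" for g
  define C where "C g = (\<Prod>j = 0..<r. lag_col_coeff ns ms a j (g j))" for g
  have term_eq: "y powr ((real k + a) * real l) / D *
      (C g * (y powr ((\<Sum>j = 0..<r. lag_exponent k a j (g j)) - (\<Sum>i = 0..<r. real i)) * V g)) =
      C g * V g / D * y ^ (sum g {0..<r} - KL)" for g
  proof (cases "V g = 0")
    case False
    then have "KL \<le> sum g {0..<r}"
      using inj_on_blocks_if_vdm_lag_exponent_nonzero[of k a g l]
      by (simp add: V_def KL_def r_def k_def l_def sum_ge_if_inj_on_blocks)
    moreover have "(\<Sum>i = 0..<r. real i) = real KL + real k * real l"
      using sum_lessThan_add_nat[of k l] unfolding KL_def r_def k_def l_def atLeast0LessThan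
      by (simp flip: of_nat_sum)
    ultimately have "(real k + a) * real l + ((\<Sum>j = 0..<r. lag_exponent k a j (g j)) - (\<Sum>i = 0..<r. real i)) =
        real (sum g {0..<r} - KL)"
      using sum_lag_exponent[where k = k and l = l and a = a and g = g] by (simp add: r_def k_def l_def of_nat_diff algebra_simps)
    then have "y powr ((real k + a) * real l) * y powr ((\<Sum>j = 0..<r. lag_exponent k a j (g j)) - (\<Sum>i = 0..<r. real i)) =
        y ^ (sum g {0..<r} - KL)"
      using y by (simp add: powr_add[symmetric] powr_realpow)
    then show ?thesis
      by (simp add: field_simps)
  qed simp
  have "y powr ((real k + a) * real l) / D *
      wronskian (map (lag_hat a) ns @ map (\<lambda>m y. y powr (- a) * lag_hat (- a) m y) ms) y =
      (\<Sum>g\<in>PiE {0..<r} (\<lambda>j. {..(ns @ ms) ! j}). y powr ((real k + a) * real l) / D *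
        (C g * (y powr ((\<Sum>j = 0..<r. lag_exponent k a j (g j)) - (\<Sum>i = 0..<r. real i)) * V g)))"
    unfolding wronskian_lag_eq_sum[OF y] by (simp add: sum_distrib_left C_def V_def k_def r_def)
  also have "\<dots> = poly (lag_poly ns ms a) y"
    unfolding term_eq by (simp add: lag_poly_def poly_sum poly_monom C_def V_def D_def KL_def k_def l_def r_def)
  finally show ?thesis
    by (simp add: D_def k_def l_def)
qed

lemma poly_eqI_pos:
  fixes p q :: "real poly"
  assumes "\<And>x. x > 0 \<Longrightarrow> poly p x = poly q x"
  shows "p = q"
proof (rule ccontr)
  assume "p \<noteq> q"
  then have "finite {x. poly (p - q) x = 0}"
    by (intro poly_roots_finite) simp
  moreover have "{0<..} \<subseteq> {x. poly (p - q) x = 0}"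
    using assms by auto
  ultimately show False
    using infinite_Ioi finite_subset by blast
qed

lemma lag_mn_generic_eq_lag_poly: "lag_mn_generic a mu nu = lag_poly (degvec mu) (degvec nu) a"
  unfolding lag_mn_generic_def
proof (rule the_equality)
  show "\<forall>x>0. poly (lag_poly (degvec mu) (degvec nu) a) x =
      x powr ((real (length mu) + a) * real (length nu)) /
      vdm (map real (degvec mu) @ map (\<lambda>m. real m - a) (degvec nu)) *
      wronskian (map (lag_hat a) (degvec mu) @ map (\<lambda>m y. y powr - a * lag_hat (- a) m y) (degvec nu)) x"
    using lag_formula_eq_poly[of _ "degvec mu" a "degvec nu"] by simp
next
  fix p
  assume "\<forall>x>0. poly p x =
      x powr ((real (length mu) + a) * real (length nu)) /
      vdm (map real (degvec mu) @ map (\<lambda>m. real m - a) (degvec nu)) *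
      wronskian (map (lag_hat a) (degvec mu) @ map (\<lambda>m y. y powr - a * lag_hat (- a) m y) (degvec nu)) x"
  then show "p = lag_poly (degvec mu) (degvec nu) a"
    using lag_formula_eq_poly[of _ "degvec mu" a "degvec nu"] by (intro poly_eqI_pos) simp
qed

lemma eventually_lag_generic:
  assumes mu: "is_partition mu" and nu: "is_partition nu"
  shows "eventually (\<lambda>a. lag_generic a mu nu) at_infinity"
proof -
  define M where "M = sum_list (degvec mu) + sum_list (degvec nu)"
  have "lag_generic a mu nu" if a: "real M + 1 \<le> norm a" for a :: real
  proof -
    have "real n \<noteq> real m - a" if "n \<in> set (degvec mu)" "m \<in> set (degvec nu)" for n m
      using member_le_sum_list[OF that(1)] member_le_sum_list[OF that(2)] a by (simp add: M_def)
    then show ?thesis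
      using distinct_degvec[OF mu] distinct_degvec[OF nu]
      by (auto simp: lag_generic_def distinct_map inj_on_def)
  qed
  then show ?thesis
    unfolding eventually_at_infinity by blast
qed

definition lag_lim_coeff :: "nat list \<Rightarrow> nat list \<Rightarrow> nat \<Rightarrow> nat \<Rightarrow> real" where
  "lag_lim_coeff ns ms j u =
     (if j < length ns then real (ns ! j choose u) * (-1) ^ (ns ! j - u) else real (ms ! (j - length ns) choose u))"

lemma tendsto_lag_col_coeff:
  assumes "j < length ns + length ms" "u \<le> (ns @ ms) ! j"
  shows "((\<lambda>a. lag_col_coeff ns ms a j u * a ^ u / a ^ ((ns @ ms) ! j)) \<longlongrightarrow> lag_lim_coeff ns ms j u) at_infinity"
  using tendsto_lag_coeff[of u _ 1] tendsto_lag_coeff[of u _ "-1"] assms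
  by (cases "j < length ns") (simp_all add: lag_col_coeff_def lag_lim_coeff_def nth_append)

lemma vdm_lag_exponent:
  "vdm (map (\<lambda>j. lag_exponent k a j (g j)) [0..<k + l]) =
    vdm (map (\<lambda>j. real (g j)) [0..<k]) * vdm (map (\<lambda>j. real (g j)) [k..<k + l]) *
    cross (map (\<lambda>j. real (g j)) [0..<k]) (map (\<lambda>z. z - a) (map (\<lambda>j. real (g j)) [k..<k + l]))"
proof -
  have "map (\<lambda>j. lag_exponent k a j (g j)) [0..<k + l] =
      map (\<lambda>j. real (g j)) [0..<k] @ map (\<lambda>z. z - a) (map (\<lambda>j. real (g j)) [k..<k + l])"
    by (simp add: upt_add_eq_append[of 0 k l] lag_exponent_def)
  then show ?thesis
    by (simp only: vdm_append vdm_map_diff)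
qed

lemma vdm_append_map_diff:
  "vdm (map real ns @ map (\<lambda>m. real m - a) ms) =
    vdm (map real ns) * vdm (map real ms) * cross (map real ns) (map (\<lambda>z. z - a) (map real ms))"
proof -
  have "map (\<lambda>m. real m - a) ms = map (\<lambda>z. z - a) (map real ms)"
    by simp
  then show ?thesis
    by (simp only: vdm_append vdm_map_diff)
qed

lemma tendsto_lag_term:
  fixes ns ms :: "nat list" and g :: "nat \<Rightarrow> nat"
  defines "k \<equiv> length ns" and "r \<equiv> length ns + length ms" and "KL \<equiv> (\<Sum>i<length ns. i) + (\<Sum>i<length ms. i)"
  defines "V \<equiv> vdm (map (\<lambda>j. real (g j)) [0..<k]) * vdm (map (\<lambda>j. real (g j)) [k..<r])"
  assumes g: "g \<in> PiE {0..<r} (\<lambda>j. {..(ns @ ms) ! j})"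
    and degree: "sum_list ns + sum_list ms = N + KL"
    and nonzero: "vdm (map real ns) * vdm (map real ms) \<noteq> 0"
  shows "((\<lambda>a. poly (monom ((\<Prod>j = 0..<r. lag_col_coeff ns ms a j (g j)) *
      vdm (map (\<lambda>j. lag_exponent k a j (g j)) [0..<r]) / vdm (map real ns @ map (\<lambda>m. real m - a) ms))
      (sum g {0..<r} - KL)) (a * x) / a ^ N) \<longlongrightarrow>
    (\<Prod>j = 0..<r. lag_lim_coeff ns ms j (g j)) * V * x ^ (sum g {0..<r} - KL) / (vdm (map real ns) * vdm (map real ms)))
    at_infinity" (is "(?T \<longlongrightarrow> _) _")
proof (cases "V = 0")
  case True
  then have "vdm (map (\<lambda>j. lag_exponent k a j (g j)) [0..<r]) = 0" for a
    using vdm_lag_exponent[of k a g "length ms"] by (simp add: V_def r_def k_def)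
  then show ?thesis
    using True by simp
next
  case False
  define G F where "G = map (\<lambda>j. real (g j)) [0..<k]" and "F = map (\<lambda>j. real (g j)) [k..<r]"
  define S where "S a = (\<Prod>j = 0..<r. lag_col_coeff ns ms a j (g j) * a ^ g j / a ^ ((ns @ ms) ! j)) * V *
      (cross G (map (\<lambda>z. z - a) F) / cross (map real ns) (map (\<lambda>z. z - a) (map real ms))) *
      x ^ (sum g {0..<r} - KL) / (vdm (map real ns) * vdm (map real ms))" for a
  have "distinct G" "distinct F"
    using False by (simp_all add: V_def G_def F_def vdm_eq_0_iff)
  then have "inj_on g {0..<k}" "inj_on g {k..<k + length ms}"
    using inj_on_if_distinct_map_of_nat[of g "[0..<k]"] inj_on_if_distinct_map_of_nat[of g "[k..<r]"]
    unfolding G_def F_def r_def k_def set_upt by blast+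
  then have KL_le: "KL \<le> sum g {0..<r}"
    using sum_ge_if_inj_on_blocks by (simp add: KL_def r_def k_def)
  have degree_sum: "N + KL = (\<Sum>j = 0..<r. (ns @ ms) ! j)"
    using degree sum_list_sum_nth[of "ns @ ms"] by (simp add: r_def)
  have V_eq: "vdm (map (\<lambda>j. lag_exponent k a j (g j)) [0..<r]) = V * cross G (map (\<lambda>z. z - a) F)" for a
    using vdm_lag_exponent[of k a g "length ms"] by (simp add: V_def G_def F_def r_def k_def)
  have "(S \<longlongrightarrow> (\<Prod>j = 0..<r. lag_lim_coeff ns ms j (g j)) * V * 1 * x ^ (sum g {0..<r} - KL) /
      (vdm (map real ns) * vdm (map real ms))) at_infinity"
    unfolding S_def using g nonzero
    by (intro tendsto_intros tendsto_lag_col_coeff tendsto_cross_ratio) (auto simp: G_def F_def k_def r_def PiE_iff)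
  moreover have "eventually (\<lambda>a. S a = ?T a) at_infinity"
  proof (rule eventually_mono[OF eventually_nonzero_at_infinity])
    fix a :: real
    assume "a \<noteq> 0"
    then show "S a = ?T a"
      unfolding S_def prod_mult_power_div_power[OF \<open>a \<noteq> 0\<close> degree_sum KL_le] V_eq vdm_append_map_diff poly_monom
      by (simp add: divide_inverse inverse_mult_distrib power_mult_distrib mult_ac)
  qed
  ultimately have "(?T \<longlongrightarrow> (\<Prod>j = 0..<r. lag_lim_coeff ns ms j (g j)) * V * 1 * x ^ (sum g {0..<r} - KL) /
      (vdm (map real ns) * vdm (map real ms))) at_infinity"
    by (rule Lim_transform_eventually)
  then show ?thesis
    by simp
qed

(* Entry (i, j) of the block diagonal Wronskian matrix of the monomials x^u, the first k columns
   forming one block and the others the second. *)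
definition power_block_entry :: "nat \<Rightarrow> real \<Rightarrow> nat \<Rightarrow> nat \<Rightarrow> nat \<Rightarrow> real" where
  "power_block_entry k x j u i =
     (if j < k then (if i < k then ffact (real u) i * x ^ (u - i) else 0)
      else (if k \<le> i then ffact (real u) (i - k) * x ^ (u - (i - k)) else 0))"

lemma det_power_block:
  fixes g :: "nat \<Rightarrow> nat" and k l :: nat
  defines "KL \<equiv> (\<Sum>i<k. i) + (\<Sum>i<l. i)"
  shows "Determinant.det (mat (k + l) (k + l) (\<lambda>(i,j). power_block_entry k x j (g j) i)) =
    vdm (map (\<lambda>j. real (g j)) [0..<k]) * vdm (map (\<lambda>j. real (g j)) [k..<k + l]) * x ^ (sum g {0..<k + l} - KL)"
proof -
  have "Determinant.det (mat (k + l) (k + l) (\<lambda>(i,j). power_block_entry k x j (g j) i)) =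
      Determinant.det (mat k k (\<lambda>(i,j). ffact (real (g j)) i * x ^ (g j - i))) *
      Determinant.det (mat l l (\<lambda>(i,j). ffact (real (g (k + j))) i * x ^ (g (k + j) - i)))"
    unfolding det_mat_block_diag[symmetric]
    by (intro arg_cong[where f = Determinant.det] cong_mat) (simp_all add: power_block_entry_def)
  also have "\<dots> = vdm (map (\<lambda>j. real (g j)) [0..<k]) * x ^ (sum g {0..<k} - (\<Sum>i<k. i)) *
      (vdm (map (\<lambda>j. real (g j)) [k..<k + l]) * x ^ (sum g {k..<k + l} - (\<Sum>i<l. i)))"
    using det_mat_ffact_power_upt[where k = 0 and l = k] det_mat_ffact_power_upt[where k = k and l = l]
    by simp
  also have "\<dots> = vdm (map (\<lambda>j. real (g j)) [0..<k]) * vdm (map (\<lambda>j. real (g j)) [k..<k + l]) * x ^ (sum g {0..<k + l} - KL)"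
  proof (cases "vdm (map (\<lambda>j. real (g j)) [0..<k]) = 0 \<or> vdm (map (\<lambda>j. real (g j)) [k..<k + l]) = 0")
    case False
    then have "distinct (map (\<lambda>j. real (g j)) [0..<k])" "distinct (map (\<lambda>j. real (g j)) [k..<k + l])"
      by (simp_all add: vdm_eq_0_iff)
    then have "inj_on g {0..<k}" "inj_on g {k..<k + l}"
      using inj_on_if_distinct_map_of_nat[of g "[0..<k]"] inj_on_if_distinct_map_of_nat[of g "[k..<k + l]"]
      unfolding set_upt by blast+
    then have "(\<Sum>i<k. i) \<le> sum g {0..<k}" "(\<Sum>i<l. i) \<le> sum g {k..<k + l}"
      using sum_lessThan_card_le_sum_inj_on[of "{0..<k}" g] sum_lessThan_card_le_sum_inj_on[of "{k..<k + l}" g]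
      by simp_all
    then have "sum g {0..<k + l} - KL = (sum g {0..<k} - (\<Sum>i<k. i)) + (sum g {k..<k + l} - (\<Sum>i<l. i))"
      unfolding KL_def sum_split_blocks by arith
    then show ?thesis
      by (simp add: power_add mult_ac)
  next
    case True
    then show ?thesis
      by (elim disjE) (simp_all only: mult_zero_left mult_zero_right)
  qed
  finally show ?thesis .
qed

lemma sum_lag_lim_coeff_power_block_entry:
  fixes ns ms :: "nat list"
  defines "k \<equiv> length ns"
  shows "(\<Sum>u\<le>(ns @ ms) ! j. lag_lim_coeff ns ms j u * power_block_entry k x j u i) =
    (if j < k then (if i < k then ffact (real (ns ! j)) i * (x - 1) ^ (ns ! j - i) else 0)
     else (if k \<le> i then ffact (real (ms ! (j - k))) (i - k) * (x + 1) ^ (ms ! (j - k) - (i - k)) else 0))"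
proof (cases "j < k")
  case True
  then show ?thesis
    using sum_binomial_ffact_power[of "ns ! j" 1 i x]
    by (cases "i < k") (simp_all add: lag_lim_coeff_def power_block_entry_def nth_append k_def mult.assoc)
next
  case False
  then show ?thesis
    using sum_binomial_ffact_power[of "ms ! (j - k)" "-1" "i - k" x]
    by (cases "k \<le> i") (simp_all add: lag_lim_coeff_def power_block_entry_def nth_append k_def mult.assoc)
qed

lemma sum_lag_lim_terms_eq_vdm:
  fixes ns ms :: "nat list"
  defines "k \<equiv> length ns" and "l \<equiv> length ms" and "r \<equiv> length ns + length ms"
  shows "(\<Sum>g\<in>PiE {0..<r} (\<lambda>j. {..(ns @ ms) ! j}). (\<Prod>j = 0..<r. lag_lim_coeff ns ms j (g j)) *
      (vdm (map (\<lambda>j. real (g j)) [0..<k]) * vdm (map (\<lambda>j. real (g j)) [k..<r])) *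
      x ^ (sum g {0..<r} - ((\<Sum>i<k. i) + (\<Sum>i<l. i)))) =
    vdm (map real ns) * (x - 1) ^ (sum_list ns - (\<Sum>i<k. i)) *
    (vdm (map real ms) * (x + 1) ^ (sum_list ms - (\<Sum>i<l. i)))"
proof -
  have r: "r = k + l"
    by (simp add: r_def k_def l_def)
  have "(\<Sum>g\<in>PiE {0..<r} (\<lambda>j. {..(ns @ ms) ! j}). (\<Prod>j = 0..<r. lag_lim_coeff ns ms j (g j)) *
      (vdm (map (\<lambda>j. real (g j)) [0..<k]) * vdm (map (\<lambda>j. real (g j)) [k..<r])) *
      x ^ (sum g {0..<r} - ((\<Sum>i<k. i) + (\<Sum>i<l. i)))) =
      Determinant.det (mat r r (\<lambda>(i,j). \<Sum>u\<in>{..(ns @ ms) ! j}. lag_lim_coeff ns ms j u * power_block_entry k x j u i))"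
    unfolding det_mat_multilinear_cols[where U = "\<lambda>j. {..(ns @ ms) ! j}", OF finite_atMost] r det_power_block
    by (simp add: mult.assoc)
  also have "mat r r (\<lambda>(i,j). \<Sum>u\<in>{..(ns @ ms) ! j}. lag_lim_coeff ns ms j u * power_block_entry k x j u i) =
      mat (k + l) (k + l) (\<lambda>(i,j). if j < k then (if i < k then ffact (real (ns ! j)) i * (x - 1) ^ (ns ! j - i) else 0)
        else (if k \<le> i then ffact (real (ms ! (j - k))) (i - k) * (x + 1) ^ (ms ! (j - k) - (i - k)) else 0))"
    unfolding r by (rule cong_mat) (simp_all add: sum_lag_lim_coeff_power_block_entry k_def)
  also have "Determinant.det \<dots> = vdm (map real ns) * (x - 1) ^ (sum_list ns - (\<Sum>i<k. i)) *
      (vdm (map real ms) * (x + 1) ^ (sum_list ms - (\<Sum>i<l. i)))"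
    using det_mat_block_diag[of k l "\<lambda>i j. ffact (real (ns ! j)) i * (x - 1) ^ (ns ! j - i)"
        "\<lambda>i j. ffact (real (ms ! j)) i * (x + 1) ^ (ms ! j - i)"]
      det_mat_ffact_power_list[of ns "x - 1"] det_mat_ffact_power_list[of ms "x + 1"]
    by (simp add: k_def l_def)
  finally show ?thesis .
qed

theorem tendsto_lag_mn:
  assumes mu: "is_partition mu" and nu: "is_partition nu"
  shows "((\<lambda>a. poly (lag_mn a mu nu) (a * x) / a ^ (psize mu + psize nu)) \<longlongrightarrow>
    (x - 1) ^ psize mu * (x + 1) ^ psize nu) at_infinity"
proof -
  define ns ms where "ns = degvec mu" and "ms = degvec nu"
  define k r where "k = length ns" and "r = length ns + length ms"
  define KL N where "KL = (\<Sum>i<length ns. i) + (\<Sum>i<length ms. i)" and "N = psize mu + psize nu"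
  define T where "T a g = poly (monom ((\<Prod>j = 0..<r. lag_col_coeff ns ms a j (g j)) *
      vdm (map (\<lambda>j. lag_exponent k a j (g j)) [0..<r]) / vdm (map real ns @ map (\<lambda>m. real m - a) ms))
      (sum g {0..<r} - KL)) (a * x) / a ^ N" for a g
  have nonzero: "vdm (map real ns) * vdm (map real ms) \<noteq> 0"
    using vdm_degvec_nonzero[OF mu] vdm_degvec_nonzero[OF nu] by (simp add: ns_def ms_def)
  have degree: "sum_list ns + sum_list ms = N + KL"
    by (simp add: ns_def ms_def N_def KL_def sum_list_degvec)
  have ev: "eventually (\<lambda>a. (\<Sum>g\<in>PiE {0..<r} (\<lambda>j. {..(ns @ ms) ! j}). T a g) = poly (lag_mn a mu nu) (a * x) / a ^ N) at_infinity"
    using eventually_lag_generic[OF mu nu]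
    by (rule eventually_mono)
       (simp add: lag_mn_def lag_mn_generic_eq_lag_poly lag_poly_def poly_sum sum_divide_distrib T_def ns_def ms_def k_def r_def KL_def)
  have lim: "((\<lambda>a. \<Sum>g\<in>PiE {0..<r} (\<lambda>j. {..(ns @ ms) ! j}). T a g) \<longlongrightarrow>
      (\<Sum>g\<in>PiE {0..<r} (\<lambda>j. {..(ns @ ms) ! j}). (\<Prod>j = 0..<r. lag_lim_coeff ns ms j (g j)) *
        (vdm (map (\<lambda>j. real (g j)) [0..<k]) * vdm (map (\<lambda>j. real (g j)) [k..<r])) *
        x ^ (sum g {0..<r} - KL) / (vdm (map real ns) * vdm (map real ms)))) at_infinity"
    unfolding T_def k_def r_def KL_def
    by (intro tendsto_sum tendsto_lag_term degree[unfolded KL_def] nonzero) simp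
  have limit_eq: "(\<Sum>g\<in>PiE {0..<r} (\<lambda>j. {..(ns @ ms) ! j}). (\<Prod>j = 0..<r. lag_lim_coeff ns ms j (g j)) *
        (vdm (map (\<lambda>j. real (g j)) [0..<k]) * vdm (map (\<lambda>j. real (g j)) [k..<r])) *
        x ^ (sum g {0..<r} - KL) / (vdm (map real ns) * vdm (map real ms))) =
      (x - 1) ^ psize mu * (x + 1) ^ psize nu"
    using nonzero unfolding sum_divide_distrib[symmetric] k_def r_def KL_def sum_lag_lim_terms_eq_vdm
    by (simp add: ns_def ms_def sum_list_degvec)
  show ?thesis
    using tendsto_cong[OF ev] lim unfolding limit_eq N_def by simp
qed

theorem proposition6p3:
  fixes mu nu :: "nat list" and x :: real
  assumes "is_partition mu" and "is_partition nu"
  shows "((\<lambda>a. poly (lag_mn a mu nu) (a * x) / a ^ (psize mu + psize nu))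
            \<longlongrightarrow> (x - 1) ^ psize mu * (x + 1) ^ psize nu) at_top \<and>
         ((\<lambda>a. poly (lag_mn a mu nu) (a * x) / a ^ (psize mu + psize nu))
            \<longlongrightarrow> (x - 1) ^ psize mu * (x + 1) ^ psize nu) at_bot \<and>
         ((\<lambda>a. omega_mn a mu nu (a * x) / a ^ (psize mu + psize nu))
            \<longlongrightarrow> (x - 1) ^ psize mu * (x + 1) ^ psize nu) at_top \<and>
         ((\<lambda>a. omega_mn a mu nu (a * x) / a ^ (psize mu + psize nu))
            \<longlongrightarrow> (x - 1) ^ psize mu * (x + 1) ^ psize nu) at_bot"
  using tendsto_lag_mn[OF assms, of x] tendsto_omega_mn[OF assms, of x]
  by (auto intro: tendsto_mono[OF at_top_le_at_infinity] tendsto_mono[OF at_bot_le_at_infinity])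

end
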